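(* Let $Q$ be a quadratic form on $\mathbb{F}_{q_1}/\mathbb{F}_q$ with rank $r_Q$. Let $H_r$ be an $r$-dimensional $\mathbb{F}_q$-subspace of $\mathbb{F}_q\times\mathbb{F}_{q_2}$ and \[N(H_r)=\#\{(x,y)\in\mathbb{F}^\star: aQ(x)+\mathrm{Tr}_{q_2/q}(by)=0 \text{ for all }(a,b)\in H_r\}.\] Let $t=\#\{(a,0)\in H_r: a\ne0\}$. Then $N(H_r)=q^{M-r}(\epsilon tq^{-r_Q/2}+1)-1$ if $r_Q$ is even, and $N(H_r)=q^{M-r}-1$ if $r_Q$ is odd.
   Context: Let $p$ be an odd prime, $m\ge1$, $q=p^m$. Let $m_1,m_2$ be positive integers, $M=m_1+m_2$, $q_i=q^{m_i}$, $\mathbb{F}=\mathbb{F}_{q_1}\times\mathbb{F}_{q_2}$, $\mathbb{F}^\star=\mathbb{F}\setminus\{(0,0)\}$. $\mathrm{Tr}_{q^s/q}$ is the trace $\mathbb{F}_{q^s}\to\mathbb{F}_q$; $\eta$ is the quadratic character of $\mathbb{F}_q$ with $\eta(0)=0$. A quadratic form $Q$ on $\mathbb{F}_{q_1}/\mathbb{F}_q$ is a map $Q:\mathbb{F}_{q_1}\to\mathbb{F}_q$ with $Q(ax)=a^2Q(x)$ ($a\in\mathbb{F}_q$) such that $B_Q(x,y)=\frac12(Q(x+y)-Q(x)-Q(y))$ is $\mathbb{F}_q$-bilinear; rank $r_Q=m_1-\dim_{\mathbb{F}_q}\{x:B_Q(x,y)=0\ \forall y\}$; in suitable coordinates $Q=\sum_{i=1}^{r_Q}\lambda_ix_i^2$,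 $\lambda_i\in\mathbb{F}_q^*$; $\Delta_Q=\lambda_1\cdots\lambda_{r_Q}$ ($1$ if $r_Q=0$), $\varepsilon_Q=\eta(\Delta_Q)$. $\epsilon=\varepsilon_Q(-1)^{(p-1)mr_Q/4}$ if $r_Q$ even, $\epsilon=\varepsilon_Q(-1)^{(p-1)m(r_Q+1)/4}$ if $r_Q$ odd. *)

theory Defs
  imports Complex_Main "HOL-Library.FuncSet" "HOL-Computational_Algebra.Primes"
begin

(* All fields live inside one ambient finite field 'a; F_q, F_{q1}, F_{q2} are subfields. *)

definition subfield :: "'a::{field,finite} set \<Rightarrow> bool" where
  "subfield S \<longleftrightarrow> 0 \<in> S \<and> 1 \<in> S \<and>
     (\<forall>x\<in>S. \<forall>y\<in>S. x + y \<in> S \<and> x * y \<in> S) \<and>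
     (\<forall>x\<in>S. - x \<in> S \<and> inverse x \<in> S)"

definition trace :: "nat \<Rightarrow> nat \<Rightarrow> 'a::{field,finite} \<Rightarrow> 'a" where
  "trace q s z = (\<Sum>i<s. z ^ (q ^ i))"

definition eta :: "'a::{field,finite} set \<Rightarrow> 'a \<Rightarrow> int" where
  "eta K a = (if a = 0 then 0 else if (\<exists>y\<in>K. y * y = a) then 1 else -1)"

(* dimension over K of a K-subspace V (a K-space of dimension d has card K ^ d elements) *)
definition dimK :: "'a set \<Rightarrow> 'b set \<Rightarrow> nat" where
  "dimK K V = (THE d. card V = card K ^ d)"

definition bform :: "('a::{field,finite} \<Rightarrow> 'a) \<Rightarrow> 'a \<Rightarrow> 'a \<Rightarrow> 'a" where
  "bform Q x y = (Q (x + y) - Q x - Q y) / 2"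

definition is_qform :: "'a::{field,finite} set \<Rightarrow> 'a set \<Rightarrow> ('a \<Rightarrow> 'a) \<Rightarrow> bool" where
  "is_qform K E Q \<longleftrightarrow>
     (\<forall>x\<in>E. Q x \<in> K) \<and>
     (\<forall>a\<in>K. \<forall>x\<in>E. Q (a * x) = a ^ 2 * Q x) \<and>
     (\<forall>a\<in>K. \<forall>x\<in>E. \<forall>x'\<in>E. \<forall>y\<in>E.
         bform Q (a * x + x') y = a * bform Q x y + bform Q x' y) \<and>
     (\<forall>a\<in>K. \<forall>x\<in>E. \<forall>y\<in>E. \<forall>y'\<in>E.
         bform Q x (a * y + y') = a * bform Q x y + bform Q x y')"

definition qf_radical :: "'a::{field,finite} set \<Rightarrow> ('a \<Rightarrow> 'a) \<Rightarrow> 'a set" where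
  "qf_radical E Q = {x\<in>E. \<forall>y\<in>E. bform Q x y = 0}"

definition qf_rank :: "'a::{field,finite} set \<Rightarrow> 'a set \<Rightarrow> nat \<Rightarrow> ('a \<Rightarrow> 'a) \<Rightarrow> nat" where
  "qf_rank K E n Q = n - dimK K (qf_radical E Q)"

definition K_basis :: "'a::{field,finite} set \<Rightarrow> 'a set \<Rightarrow> nat \<Rightarrow> (nat \<Rightarrow> 'a) \<Rightarrow> bool" where
  "K_basis K E n b \<longleftrightarrow>
     (\<forall>c\<in>{..<n} \<rightarrow>\<^sub>E K. (\<Sum>i<n. c i * b i) \<in> E) \<and>
     (\<forall>x\<in>E. \<exists>!c. c \<in> {..<n} \<rightarrow>\<^sub>E K \<and> x = (\<Sum>i<n. c i * b i))"

definition qf_diag :: "'a::{field,finite} set \<Rightarrow> 'a set \<Rightarrow> nat \<Rightarrow> ('a \<Rightarrow> 'a) \<Rightarrow> nat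
     \<Rightarrow> (nat \<Rightarrow> 'a) \<Rightarrow> (nat \<Rightarrow> 'a) \<Rightarrow> bool" where
  "qf_diag K E n Q r lam b \<longleftrightarrow> K_basis K E n b \<and> (\<forall>i<r. lam i \<in> K - {0}) \<and>
     (\<forall>c\<in>{..<n} \<rightarrow>\<^sub>E K. Q (\<Sum>i<n. c i * b i) = (\<Sum>i<r. lam i * c i ^ 2))"

definition qf_Delta :: "'a::{field,finite} set \<Rightarrow> 'a set \<Rightarrow> nat \<Rightarrow> ('a \<Rightarrow> 'a) \<Rightarrow> 'a" where
  "qf_Delta K E n Q = (let r = qf_rank K E n Q;
      lam = (SOME lam. \<exists>b. qf_diag K E n Q r lam b) in (\<Prod>i<r. lam i))"

definition qf_varepsilon :: "'a::{field,finite} set \<Rightarrow> 'a set \<Rightarrow> nat \<Rightarrow> ('a \<Rightarrow> 'a) \<Rightarrow> int" where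
  "qf_varepsilon K E n Q = eta K (qf_Delta K E n Q)"

definition qf_epsilon :: "nat \<Rightarrow> nat \<Rightarrow> 'a::{field,finite} set \<Rightarrow> 'a set \<Rightarrow> nat \<Rightarrow> ('a \<Rightarrow> 'a) \<Rightarrow> int" where
  "qf_epsilon p m K E n Q = (let r = qf_rank K E n Q in
     if even r then qf_varepsilon K E n Q * (-1) ^ ((p - 1) * m * r div 4)
     else qf_varepsilon K E n Q * (-1) ^ ((p - 1) * m * (r + 1) div 4))"

definition K_subspace_pair :: "'a::{field,finite} set \<Rightarrow> 'a set \<Rightarrow> ('a \<times> 'a) set \<Rightarrow> bool" where
  "K_subspace_pair K E2 H \<longleftrightarrow> H \<subseteq> K \<times> E2 \<and> (0, 0) \<in> H \<and>
     (\<forall>u\<in>H. \<forall>v\<in>H. (fst u + fst v, snd u + snd v) \<in> H) \<and>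
     (\<forall>c\<in>K. \<forall>u\<in>H. (c * fst u, c * snd u) \<in> H)"

end

(*
  Let S be the set of all (x, y) in E1 x E2 satisfying the equations, (0, 0) included, so that
  N = |S| - 1.  The K-bilinear form <(a, b), (c, y)> = a c + Tr(b y) on K x E2 is nondegenerate,
  hence the orthogonal complement of H has q^(m2+1-r) elements, and (x, y) lies in S iff (Q x, y)
  lies in that complement.

  If (1, 0) is in H, the complement lies in {0} x E2, so only the zeros of Q contribute and
  t = q - 1.  The zeros of Q are counted by diagonalising Q and counting the solutions of a
  diagonal equation by induction on the number of variables (Lidl and Niederreiter, Finite
  Fields, Thms. 6.26 and 6.27); the sign eta(-1)^(rQ/2) eta(Delta_Q) appearing there is epsilon.

  If (1, 0) is not in H, then t = 0, and since H is the complement of its complement, the first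
  coordinate maps the complement of H onto K; all its fibres have the same size, and |S| = q^(M-r).
*)

theory Submission
  imports Defs "HOL-Computational_Algebra.Polynomial" "HOL-Library.Product_Plus"
begin

lemma subfield_zero: "subfield S \<Longrightarrow> 0 \<in> S"
  and subfield_one: "subfield S \<Longrightarrow> 1 \<in> S"
  and subfield_add: "subfield S \<Longrightarrow> x \<in> S \<Longrightarrow> y \<in> S \<Longrightarrow> x + y \<in> S"
  and subfield_mult: "subfield S \<Longrightarrow> x \<in> S \<Longrightarrow> y \<in> S \<Longrightarrow> x * y \<in> S"
  and subfield_uminus: "subfield S \<Longrightarrow> x \<in> S \<Longrightarrow> - x \<in> S"
  and subfield_inverse: "subfield S \<Longrightarrow> x \<in> S \<Longrightarrow> inverse x \<in> S"
  by (simp_all add: subfield_def)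

lemma subfield_diff: "subfield S \<Longrightarrow> x \<in> S \<Longrightarrow> y \<in> S \<Longrightarrow> x - y \<in> S"
  by (metis diff_conv_add_uminus subfield_add subfield_uminus)

lemma subfield_divide: "subfield S \<Longrightarrow> x \<in> S \<Longrightarrow> y \<in> S \<Longrightarrow> x / y \<in> S"
  by (metis divide_inverse subfield_inverse subfield_mult)

lemma subfield_power: "subfield S \<Longrightarrow> x \<in> S \<Longrightarrow> x ^ n \<in> S"
  by (induction n) (auto intro: subfield_one subfield_mult)

lemma subfield_prod: "subfield S \<Longrightarrow> (\<And>i. i \<in> A \<Longrightarrow> f i \<in> S) \<Longrightarrow> prod f A \<in> S"
  by (induction A rule: infinite_finite_induct) (auto intro: subfield_one subfield_mult)

lemma subfield_affine_bij:
  assumes "subfield S" "l \<in> S" "l \<noteq> 0" "c \<in> S"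
  shows "bij_betw (\<lambda>w. l * w + c) S S"
proof (rule bij_betw_imageI)
  show "inj_on (\<lambda>w. l * w + c) S"
    using \<open>l \<noteq> 0\<close> by (auto intro: inj_onI)
  show "(\<lambda>w. l * w + c) ` S = S"
  proof
    show "(\<lambda>w. l * w + c) ` S \<subseteq> S"
      using assms by (auto intro: subfield_add subfield_mult)
    show "S \<subseteq> (\<lambda>w. l * w + c) ` S"
    proof
      fix y assume "y \<in> S"
      then have "(y - c) / l \<in> S" and "y = l * ((y - c) / l) + c"
        using assms by (auto intro: subfield_divide subfield_diff)
      then show "y \<in> (\<lambda>w. l * w + c) ` S" by blast
    qed
  qed
qed

lemma subfield_power_card:
  fixes x :: "'a::{field,finite}"
  assumes S: "subfield S" and x: "x \<in> S"
  shows "x ^ card S = x"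
proof (cases "x = 0")
  case True
  then show ?thesis
    using subfield_zero[OF S] by (auto simp: card_gt_0_iff)
next
  case False
  have "bij_betw (\<lambda>w. x * w + 0) S S"
    using subfield_affine_bij[OF S x False subfield_zero[OF S]] .
  then have "bij_betw ((*) x) (S - {0}) (S - {0})"
    using subfield_zero[OF S] by (intro bij_betw_DiffI) (auto simp: bij_betw_def)
  then have "(\<Prod>y\<in>S - {0}. x * y) = (\<Prod>y\<in>S - {0}. y)"
    by (rule prod.reindex_bij_betw)
  then have "x ^ card (S - {0}) = 1"
    by (simp add: prod.distrib)
  moreover have "card S = Suc (card (S - {0}))"
    using subfield_zero[OF S] by (metis card_Suc_Diff1 finite)
  ultimately show ?thesis by simp
qed

lemma odd_power_half: "\<exists>h. (2 * a + 1 :: nat) ^ k = 2 * h + 1 \<and> even (h + k * a)"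
proof (induction k)
  case (Suc k)
  then obtain h where h: "(2 * a + 1) ^ k = 2 * h + 1" "even (h + k * a)"
    by blast
  then have "(2 * a + 1) ^ Suc k = 2 * (2 * a * h + a + h) + 1"
    by (simp add: algebra_simps)
  moreover have "even (2 * a * h + a + h + Suc k * a)"
    using h(2) by (simp add: algebra_simps)
  ultimately show ?case
    by blast
qed simp

lemma sum_card_swap:
  assumes "finite A" "finite B"
  shows "(\<Sum>a\<in>A. card {b \<in> B. R a b}) = (\<Sum>b\<in>B. card {a \<in> A. R a b})"
proof -
  have "(\<Sum>a\<in>A. card {b \<in> B. R a b}) = (\<Sum>a\<in>A. \<Sum>b\<in>B. if R a b then 1 else 0)"
    using assms(2) by (simp add: sum.If_cases Int_def conj_commute)
  also have "\<dots> = (\<Sum>b\<in>B. \<Sum>a\<in>A. if R a b then 1 else 0)"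
    by (rule sum.swap)
  also have "\<dots> = (\<Sum>b\<in>B. card {a \<in> A. R a b})"
    using assms(1) by (simp add: sum.If_cases Int_def conj_commute)
  finally show ?thesis .
qed

lemma card_Collect_bij_betw:
  "bij_betw f A B \<Longrightarrow> card {x \<in> B. P x} = card {a \<in> A. P (f a)}"
  by (rule bij_betw_same_card[symmetric], rule bij_betw_subset[of f A B]) (auto simp: bij_betw_def)

lemma eq_power_diff_mult:
  fixes a b x :: real
  assumes "x > 0" "r \<le> M" "a * x ^ r = x ^ M * b"
  shows "a = x ^ (M - r) * b"
proof -
  have "x ^ M = x ^ (M - r) * x ^ r"
    using assms(2) by (simp flip: power_add)
  then show ?thesis
    using assms(1,3) by simp
qed

section \<open>Finite fields of odd characteristic\<close>

locale finite_subfield =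
  fixes K :: "'a::{field,finite} set" and p m q :: nat
  assumes subfield_K: "subfield K" and card_K: "card K = q" and q_eq: "q = p ^ m"
    and prime_p: "prime p" and odd_p: "odd p" and m_pos: "m \<ge> 1"
begin

lemmas K_zero = subfield_zero[OF subfield_K]
  and K_one = subfield_one[OF subfield_K]
  and K_add = subfield_add[OF subfield_K]
  and K_mult = subfield_mult[OF subfield_K]
  and K_uminus = subfield_uminus[OF subfield_K]
  and K_diff = subfield_diff[OF subfield_K]
  and K_divide = subfield_divide[OF subfield_K]
  and K_power = subfield_power[OF subfield_K]
  and K_prod = subfield_prod[OF subfield_K]

lemma K_two: "(2::'a) \<in> K"
  by (metis K_add K_one one_add_one)

lemma q_odd: "odd q"
  using odd_p by (simp add: q_eq)

lemma q_ge_3: "q \<ge> 3"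
proof -
  have "p \<ge> 3"
    using prime_ge_2_nat[OF prime_p] odd_p by presburger
  moreover have "p \<le> q"
    using m_pos prime_gt_0_nat[OF prime_p] by (simp add: q_eq self_le_power)
  ultimately show ?thesis by simp
qed

lemma q_pos: "q > 0"
  using q_ge_3 by simp

lemma sum_K_affine: "l \<in> K \<Longrightarrow> l \<noteq> 0 \<Longrightarrow> c \<in> K \<Longrightarrow> (\<Sum>w\<in>K. f (l * w + c)) = (\<Sum>w\<in>K. f w)"
  by (rule sum.reindex_bij_betw[OF subfield_affine_bij[OF subfield_K]])

lemma of_nat_q_eq_zero: "of_nat q = (0::'a)"
proof -
  have "(\<Sum>w\<in>K. 1 * w + 1) = (\<Sum>w\<in>K. w :: 'a)"
    using sum_K_affine[of 1 1 "\<lambda>w. w"] K_one by simp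
  then show ?thesis
    by (simp add: sum.distrib card_K)
qed

lemma CHAR_eq_p: "CHAR('a) = p"
proof -
  have "(of_nat p :: 'a) ^ m = 0"
    using of_nat_q_eq_zero by (simp add: q_eq)
  then have "CHAR('a) dvd p"
    by (simp add: of_nat_eq_0_iff_char_dvd)
  moreover have "CHAR('a) \<noteq> 1"
    by (metis of_nat_1 of_nat_CHAR one_neq_zero)
  ultimately show ?thesis
    using prime_p by (metis prime_nat_iff)
qed

lemma two_neq_zero: "(2::'a) \<noteq> 0"
proof
  assume "(2::'a) = 0"
  then have "p dvd 2"
    using CHAR_eq_p by (metis of_nat_eq_0_iff_char_dvd of_nat_numeral)
  then have "p \<le> 2"
    by (simp add: dvd_imp_le)
  then show False
    using odd_p prime_ge_2_nat[OF prime_p] by presburger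
qed

lemma neg_neq_self: "y \<noteq> 0 \<Longrightarrow> - y \<noteq> (y::'a)"
  using two_neq_zero by (metis mult_2 neg_equal_iff_equal add_eq_0_iff2 mult_eq_0_iff)

lemma q_power_eq_CHAR_power: "q ^ i = CHAR('a) ^ (m * i)"
  by (simp add: CHAR_eq_p q_eq power_mult)

lemma frobenius_sum: "(sum f A :: 'a) ^ (q ^ i) = (\<Sum>j\<in>A. f j ^ (q ^ i))"
  using freshmans_dream_sum' CHAR_eq_p prime_p q_power_eq_CHAR_power by metis

lemma frobenius_add: "(x + y :: 'a) ^ (q ^ i) = x ^ (q ^ i) + y ^ (q ^ i)"
  using freshmans_dream' CHAR_eq_p prime_p q_power_eq_CHAR_power by metis

lemma K_power_q: "c \<in> K \<Longrightarrow> c ^ q = c"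
  using subfield_power_card[OF subfield_K] card_K by blast

lemma K_power_q_power: "c \<in> K \<Longrightarrow> c ^ (q ^ i) = c"
  by (induction i) (simp_all add: power_mult K_power_q)

lemma K_power_q_minus_1: "c \<in> K \<Longrightarrow> c \<noteq> 0 \<Longrightarrow> c ^ (q - 1) = 1"
  using K_power_q[of c] q_pos by (metis Suc_diff_1 mult_cancel_left1 power_Suc)

lemma in_K_if_power_q: "w ^ q = w \<Longrightarrow> w \<in> K"
proof -
  assume w: "w ^ q = w"
  define P :: "'a poly" where "P = monom 1 q - monom 1 1"
  have poly_P: "poly P x = x ^ q - x" for x
    by (simp add: P_def poly_monom)
  have "coeff P q = 1"
    using q_ge_3 by (simp add: P_def coeff_monom)
  then have "P \<noteq> 0" by auto
  moreover have "degree P \<le> q"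
    unfolding P_def using q_ge_3 by (intro degree_diff_le) (auto intro: order.trans[OF degree_monom_le])
  ultimately have "card {x. poly P x = 0} \<le> q"
    using card_poly_roots_bound[of P] by linarith
  moreover have "K \<subseteq> {x. poly P x = 0}"
    using K_power_q poly_P by auto
  ultimately have "K = {x. poly P x = 0}"
    using card_K by (metis card_mono card_subset_eq finite le_antisym)
  then show "w \<in> K"
    using poly_P w by simp
qed

lemma roots_of_square: "y0 \<in> K \<Longrightarrow> {y \<in> K. y * y = y0 * y0} = {y0, - y0}"
  using K_uminus by (auto simp: square_eq_iff)

definition squares :: "'a set" where
  "squares = {a \<in> K - {0}. \<exists>y\<in>K. y * y = a}"

lemma card_squares: "2 * card squares = q - 1"
proof -
  have fibre: "card {y \<in> K. y * y = a} = 2" if a: "a \<in> squares" for a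
  proof -
    obtain y0 where y0: "y0 \<in> K" "y0 \<noteq> 0" "a = y0 * y0"
      using a by (auto simp: squares_def)
    then show ?thesis
      using roots_of_square neg_neq_self by simp
  qed
  have "K - {0} = (\<Union>a\<in>squares. {y \<in> K. y * y = a})"
    by (auto simp: squares_def intro: K_mult)
  then have "card (K - {0}) = (\<Sum>a\<in>squares. card {y \<in> K. y * y = a})"
    by (auto intro: card_UN_disjoint)
  also have "\<dots> = 2 * card squares"
    using fibre by simp
  finally show ?thesis
    using K_zero card_K by simp
qed

text \<open>The \<open>(q - 1) div 2\<close> nonzero squares are roots of \<open>X ^ ((q - 1) div 2) - 1\<close>, hence
  all of them.\<close>

lemma squares_eq_roots: "squares = {x. x ^ ((q - 1) div 2) = 1}"
proof -
  let ?h = "(q - 1) div 2"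
  have two_h: "2 * ?h = q - 1"
    using q_odd q_pos by simp
  define P :: "'a poly" where "P = monom 1 ?h - 1"
  have poly_P: "poly P x = x ^ ?h - 1" for x
    by (simp add: P_def poly_monom)
  have "coeff P ?h = 1"
    using q_ge_3 by (simp add: P_def coeff_monom)
  then have "P \<noteq> 0" by auto
  moreover have "degree P \<le> ?h"
    unfolding P_def by (metis degree_1 degree_diff_le degree_monom_le le_zero_eq zero_le)
  ultimately have "card {x. poly P x = 0} \<le> ?h"
    using card_poly_roots_bound[of P] by linarith
  moreover have "squares \<subseteq> {x. poly P x = 0}"
  proof
    fix b assume "b \<in> squares"
    then obtain y where "y \<in> K" "y \<noteq> 0" "b = y * y"
      by (auto simp: squares_def)
    then have "b ^ ?h = 1"
      using K_power_q_minus_1 two_h by (metis power2_eq_square power_mult)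
    then show "b \<in> {x. poly P x = 0}"
      by (simp add: poly_P)
  qed
  moreover have "card squares = ?h"
    using card_squares two_h by simp
  ultimately have "squares = {x. poly P x = 0}"
    by (metis card_mono card_subset_eq finite le_antisym)
  then show ?thesis
    by (simp add: poly_P)
qed

lemma euler_criterion: "a \<in> K \<Longrightarrow> of_int (eta K a) = a ^ ((q - 1) div 2)"
proof -
  assume a: "a \<in> K"
  let ?h = "(q - 1) div 2"
  have h_pos: "?h \<noteq> 0"
    using q_ge_3 by simp
  consider "a = 0" | "a \<in> squares" | "a \<noteq> 0" "a \<notin> squares"
    by blast
  then show ?thesis
  proof cases
    case 1
    then show ?thesis
      using h_pos by (simp add: eta_def)
  next
    case 2
    then have "eta K a = 1"
      by (auto simp: eta_def squares_def)
    moreover have "a ^ ?h = 1"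
      using 2 squares_eq_roots by blast
    ultimately show ?thesis by simp
  next
    case 3
    have "eta K a = -1"
      using 3 a by (auto simp: eta_def squares_def)
    have "?h + ?h = q - 1"
      using q_odd by presburger
    then have "a ^ ?h * a ^ ?h = 1 * 1"
      using K_power_q_minus_1[OF a \<open>a \<noteq> 0\<close>] by (simp flip: power_add)
    moreover have "a ^ ?h \<noteq> 1"
      using 3 squares_eq_roots by blast
    ultimately have "a ^ ?h = -1"
      by (metis mult_1 square_eq_iff)
    with \<open>eta K a = -1\<close> show ?thesis by simp
  qed
qed

lemma of_int_sign_inject:
  assumes "x \<in> {-1, 0, 1}" "y \<in> {-1, 0, 1}" "(of_int x :: 'a) = of_int y"
  shows "x = y"
  using assms neg_neq_self[of "1::'a"] by auto

lemma eta_range: "eta K a \<in> {-1, 0, 1}"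
  by (simp add: eta_def)

lemma eta_mult: "a \<in> K \<Longrightarrow> b \<in> K \<Longrightarrow> eta K (a * b) = eta K a * eta K b"
proof (rule of_int_sign_inject)
  assume "a \<in> K" "b \<in> K"
  then show "(of_int (eta K (a * b)) :: 'a) = of_int (eta K a * eta K b)"
    using euler_criterion K_mult by (simp add: power_mult_distrib)
  show "eta K a * eta K b \<in> {-1, 0, 1}"
    using eta_range[of a] eta_range[of b] by auto
qed (rule eta_range)

lemma eta_minus_one: "eta K (-1) = (-1) ^ ((q - 1) div 2)"
proof (rule of_int_sign_inject)
  show "(of_int (eta K (-1)) :: 'a) = of_int ((-1) ^ ((q - 1) div 2))"
    using euler_criterion K_one K_uminus by simp
  show "(-1::int) ^ ((q - 1) div 2) \<in> {-1, 0, 1}"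
    by (simp add: minus_one_power_iff)
qed (rule eta_range)

lemma eta_one: "eta K 1 = 1"
  using K_one by (auto simp: eta_def intro: bexI[of _ 1])

lemma eta_power: "a \<in> K \<Longrightarrow> eta K (a ^ k) = eta K a ^ k"
  by (induction k) (simp_all add: eta_one eta_mult K_power)

lemma eta_minus_one_power: "eta K (-1) ^ j = (-1) ^ ((p - 1) * m * (2 * j) div 4)"
proof -
  obtain a where a: "p = 2 * a + 1"
    using odd_p oddE by blast
  obtain h where h: "q = 2 * h + 1" "even (h + m * a)"
    using odd_power_half[of a m] a q_eq by blast
  have "(p - 1) * m * (2 * j) div 4 = a * m * j"
    using a by simp
  moreover have "even h \<longleftrightarrow> even (a * m)"
    using h(2) by (simp add: mult.commute)
  then have "(-1::int) ^ (h * j) = (-1) ^ (a * m * j)"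
    by (simp add: minus_one_power_iff even_mult_iff)
  ultimately show ?thesis
    using eta_minus_one h(1) by (simp add: power_mult)
qed

lemma eta_square_mult:
  assumes "y \<in> K" "y \<noteq> 0" "a \<in> K"
  shows "eta K (y * y * a) = eta K a"
proof -
  have "eta K (y * y) = 1"
    using assms by (auto simp: eta_def)
  then show ?thesis
    using eta_mult[of "y * y" a] assms K_mult by simp
qed

lemma card_sqrt_scaled:
  assumes l: "l \<in> K" "l \<noteq> 0" and w: "w \<in> K"
  shows "int (card {u \<in> K. l * u ^ 2 = w}) = 1 + eta K (l * w)"
proof -
  have wl: "w / l \<in> K"
    using l w K_divide by blast
  have "eta K (l * w) = eta K (l * l * (w / l))"
    using l by (simp add: field_simps)
  also have "\<dots> = eta K (w / l)"
    using eta_square_mult l wl by blast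
  finally have eta_lw: "eta K (l * w) = eta K (w / l)" .
  have set_eq: "{u \<in> K. l * u ^ 2 = w} = {u \<in> K. u * u = w / l}"
    using l by (auto simp: power2_eq_square field_simps)
  show ?thesis
  proof (cases "\<exists>y0\<in>K. y0 * y0 = w / l")
    case True
    then obtain y0 where y0: "y0 \<in> K" "w / l = y0 * y0"
      by auto
    then have set: "{u \<in> K. l * u ^ 2 = w} = {y0, - y0}"
      using set_eq roots_of_square by simp
    show ?thesis
    proof (cases "y0 = 0")
      case True
      then show ?thesis
        using set eta_lw y0 by (simp add: eta_def)
    next
      case False
      then have "eta K (w / l) = 1"
        using y0 by (auto simp: eta_def)
      then show ?thesis
        using set eta_lw neg_neq_self[OF False] by simp
    qed
  next
    case False
    then have "w / l \<noteq> 0"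
      using K_zero by force
    then show ?thesis
      using False set_eq eta_lw by (simp add: eta_def)
  qed
qed

lemma sum_square_fibres:
  fixes f :: "'a \<Rightarrow> int"
  assumes l: "l \<in> K" "l \<noteq> 0"
  shows "(\<Sum>u\<in>K. f (l * u ^ 2)) = (\<Sum>w\<in>K. (1 + eta K (l * w)) * f w)"
proof -
  have "(\<lambda>u. l * u ^ 2) ` K \<subseteq> K"
    using l K_mult K_power by blast
  then have "(\<Sum>u\<in>K. f (l * u ^ 2)) = (\<Sum>w\<in>K. \<Sum>u\<in>{u \<in> K. l * u ^ 2 = w}. f (l * u ^ 2))"
    using sum.group[of K K "\<lambda>u. l * u ^ 2" "\<lambda>u. f (l * u ^ 2)"] by simp
  also have "\<dots> = (\<Sum>w\<in>K. int (card {u \<in> K. l * u ^ 2 = w}) * f w)"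
    by simp
  also have "\<dots> = (\<Sum>w\<in>K. (1 + eta K (l * w)) * f w)"
    using card_sqrt_scaled[OF l] by simp
  finally show ?thesis .
qed

lemma sum_eta: "(\<Sum>a\<in>K. eta K a) = 0"
  using sum_square_fibres[of 1 "\<lambda>_. 1"] K_one by (simp add: sum.distrib)

lemma sum_eta_affine: "l \<in> K \<Longrightarrow> l \<noteq> 0 \<Longrightarrow> c \<in> K \<Longrightarrow> (\<Sum>w\<in>K. eta K (l * w + c)) = 0"
  using sum_K_affine[of l c "eta K"] sum_eta by simp

section \<open>Diagonal quadratic equations\<close>

definition nu :: "'a \<Rightarrow> int" where
  "nu c = (if c = 0 then int q - 1 else -1)"

lemma bij_betw_reciprocal_shift:
  assumes c: "c \<in> K" "c \<noteq> 0"
  shows "bij_betw (\<lambda>w. c / w - 1) (K - {0}) (K - {-1})"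
proof (rule bij_betw_imageI)
  show "inj_on (\<lambda>w. c / w - 1) (K - {0})"
    using c by (auto intro!: inj_onI simp: field_simps)
  show "(\<lambda>w. c / w - 1) ` (K - {0}) = K - {-1}"
  proof
    show "(\<lambda>w. c / w - 1) ` (K - {0}) \<subseteq> K - {-1}"
      using c K_divide K_diff K_one by auto
    show "K - {-1} \<subseteq> (\<lambda>w. c / w - 1) ` (K - {0})"
    proof
      fix u assume u: "u \<in> K - {-1}"
      then have "u + 1 \<noteq> 0"
        by (metis DiffD2 add_eq_0_iff2 singletonI)
      then have "u = c / (c / (u + 1)) - 1" and "c / (u + 1) \<in> K - {0}"
        using u c K_add K_one K_divide by auto
      then show "u \<in> (\<lambda>w. c / w - 1) ` (K - {0})"
        by blast
    qed
  qed
qed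

lemma sum_eta_mult_diff:
  assumes c: "c \<in> K"
  shows "(\<Sum>w\<in>K. eta K (w * (c - w))) = nu c * eta K (-1)"
proof (cases "c = 0")
  case True
  have "(\<Sum>w\<in>K. eta K (w * (c - w))) = (\<Sum>w\<in>K - {0}. eta K (w * w * (-1)))"
    using True K_zero by (simp add: sum.remove[of K 0] eta_def)
  also have "\<dots> = (\<Sum>w\<in>K - {0}. eta K (-1))"
    using K_one K_uminus by (intro sum.cong refl eta_square_mult) auto
  also have "\<dots> = nu c * eta K (-1)"
    using True K_zero card_K q_pos by (simp add: nu_def of_nat_diff)
  finally show ?thesis .
next
  case False
  have "(\<Sum>w\<in>K. eta K (w * (c - w))) = (\<Sum>w\<in>K - {0}. eta K (w * (c - w)))"
    using K_zero by (simp add: sum.remove[of K 0] eta_def)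
  also have "\<dots> = (\<Sum>w\<in>K - {0}. eta K (w * w * (c / w - 1)))"
    by (intro sum.cong refl arg_cong[where f = "eta K"]) (auto simp: field_simps)
  also have "\<dots> = (\<Sum>w\<in>K - {0}. eta K (c / w - 1))"
    using eta_square_mult c K_divide K_diff K_one by simp
  also have "\<dots> = (\<Sum>u\<in>K - {-1}. eta K u)"
    by (rule sum.reindex_bij_betw[OF bij_betw_reciprocal_shift[OF c False]])
  also have "\<dots> = - eta K (-1)"
    using sum.remove[of K "-1" "eta K"] sum_eta K_one K_uminus by simp
  finally show ?thesis
    using False by (simp add: nu_def)
qed

definition num_solutions :: "nat \<Rightarrow> (nat \<Rightarrow> 'a \<Rightarrow> 'a) \<Rightarrow> 'a \<Rightarrow> nat" where
  "num_solutions n g c = card {x \<in> {..<n} \<rightarrow>\<^sub>E K. (\<Sum>i<n. g i (x i)) = c}"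

lemma num_solutions_0: "num_solutions 0 g c = (if c = 0 then 1 else 0)"
  by (simp add: num_solutions_def)

lemma num_solutions_Suc: "num_solutions (Suc n) g c = (\<Sum>u\<in>K. num_solutions n g (c - g n u))"
proof -
  let ?upd = "\<lambda>(u, x). x(n := u)"
  let ?P = "{..<n} \<rightarrow>\<^sub>E K"
  let ?A = "\<lambda>u. {x \<in> ?P. (\<Sum>i<n. g i (x i)) = c - g n u}"
  have sum_upd: "(\<Sum>i<Suc n. g i ((x(n := u)) i)) = (\<Sum>i<n. g i (x i)) + g n u" for x u
  proof -
    have "(\<Sum>i<n. g i ((x(n := u)) i)) = (\<Sum>i<n. g i (x i))"
      by (rule sum.cong) auto
    then show ?thesis by simp
  qed
  have "{..<Suc n} \<rightarrow>\<^sub>E K = ?upd ` (K \<times> ?P)"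
    using PiE_insert_eq[of n "{..<n}" "\<lambda>_. K"] by (simp add: lessThan_Suc)
  then have "{x \<in> {..<Suc n} \<rightarrow>\<^sub>E K. (\<Sum>i<Suc n. g i (x i)) = c} = ?upd ` Sigma K ?A"
    using sum_upd by (auto simp: eq_diff_eq)
  moreover have "inj_on ?upd (Sigma K ?A)"
    using inj_combinator[of n "{..<n}" "\<lambda>_. K"] by (rule inj_on_subset) auto
  ultimately have "num_solutions (Suc n) g c = card (Sigma K ?A)"
    by (simp add: num_solutions_def card_image)
  also have "\<dots> = (\<Sum>u\<in>K. num_solutions n g (c - g n u))"
    using card_SigmaI[of K ?A] by (simp add: num_solutions_def finite_PiE)
  finally show ?thesis .
qed

definition diag :: "nat \<Rightarrow> (nat \<Rightarrow> 'a) \<Rightarrow> nat \<Rightarrow> 'a \<Rightarrow> 'a" where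
  "diag r lam i u = (if i < r then lam i * u ^ 2 else 0)"

definition signed_disc :: "(nat \<Rightarrow> 'a) \<Rightarrow> nat \<Rightarrow> 'a" where
  "signed_disc lam n = (-1) ^ (n div 2) * (\<Prod>i<n. lam i)"

lemma signed_disc_in_K:
  assumes "\<forall>i<r. lam i \<in> K - {0}" "n \<le> r"
  shows "signed_disc lam n \<in> K - {0}"
proof -
  have "(\<Prod>i<n. lam i) \<in> K" "(\<Prod>i<n. lam i) \<noteq> 0"
    using assms by (auto intro: K_prod)
  moreover have "(-1::'a) ^ (n div 2) \<in> K"
    by (intro K_power K_uminus K_one)
  ultimately show ?thesis
    by (auto simp: signed_disc_def intro: K_mult)
qed

lemma sum_one_plus_eta: "l \<in> K \<Longrightarrow> l \<noteq> 0 \<Longrightarrow> (\<Sum>w\<in>K. 1 + eta K (l * w)) = int q"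
  using sum_square_fibres[of l "\<lambda>_. 1"] card_K by simp

lemma sum_one_plus_eta_nu:
  assumes l: "l \<in> K" "l \<noteq> 0" and c: "c \<in> K"
  shows "(\<Sum>w\<in>K. (1 + eta K (l * w)) * nu (c - w)) = int q * eta K (l * c)"
proof -
  have "(\<Sum>w\<in>K. (1 + eta K (l * w)) * nu (c - w))
      = (\<Sum>w\<in>K. (if w = c then int q * (1 + eta K (l * w)) else 0) - (1 + eta K (l * w)))"
    by (rule sum.cong) (auto simp: nu_def algebra_simps)
  also have "\<dots> = int q * (1 + eta K (l * c)) - int q"
    using c sum_one_plus_eta[OF l] by (simp add: sum_subtractf sum.delta)
  finally show ?thesis
    by (simp add: algebra_simps)
qed

lemma num_solutions_diag_Suc:
  assumes "n < r" "lam n \<in> K" "lam n \<noteq> 0"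
  shows "int (num_solutions (Suc n) (diag r lam) c)
       = (\<Sum>w\<in>K. (1 + eta K (lam n * w)) * int (num_solutions n (diag r lam) (c - w)))"
  using assms sum_square_fibres[of "lam n" "\<lambda>w. int (num_solutions n (diag r lam) (c - w))"]
  by (simp add: num_solutions_Suc diag_def)

lemma num_solutions_diag_odd_step:
  assumes lam: "\<forall>i<r. lam i \<in> K - {0}" and n: "n < r" "even n" and c: "c \<in> K"
    and IH: "\<And>c. c \<in> K \<Longrightarrow> int q * int (num_solutions n (diag r lam) c)
               = int q ^ n + nu c * int q ^ (n div 2) * eta K (signed_disc lam n)"
  shows "int (num_solutions (Suc n) (diag r lam) c)
       = int q ^ n + int q ^ (n div 2) * eta K (c * signed_disc lam (Suc n))"
proof -
  define l where "l = lam n"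
  define d where "d = signed_disc lam n"
  have l: "l \<in> K" "l \<noteq> 0" and d: "d \<in> K"
    using lam n signed_disc_in_K[OF lam, of n] by (auto simp: l_def d_def)
  have "int q * int (num_solutions (Suc n) (diag r lam) c)
      = (\<Sum>w\<in>K. (1 + eta K (l * w)) * (int q * int (num_solutions n (diag r lam) (c - w))))"
    using num_solutions_diag_Suc[OF n(1)] l by (simp add: l_def sum_distrib_left algebra_simps)
  also have "\<dots> = (\<Sum>w\<in>K. (1 + eta K (l * w)) * (int q ^ n + nu (c - w) * int q ^ (n div 2) * eta K d))"
    using IH c K_diff by (simp add: d_def)
  also have "\<dots> = (\<Sum>w\<in>K. int q ^ n * (1 + eta K (l * w))
      + int q ^ (n div 2) * eta K d * ((1 + eta K (l * w)) * nu (c - w)))"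
    by (simp add: algebra_simps)
  also have "\<dots> = int q ^ n * (\<Sum>w\<in>K. 1 + eta K (l * w))
      + int q ^ (n div 2) * eta K d * (\<Sum>w\<in>K. (1 + eta K (l * w)) * nu (c - w))"
    by (simp add: sum.distrib flip: sum_distrib_left)
  also have "\<dots> = int q * (int q ^ n + int q ^ (n div 2) * eta K (d * (l * c)))"
    using sum_one_plus_eta[OF l] sum_one_plus_eta_nu[OF l c] eta_mult d l c K_mult
    by (simp add: algebra_simps)
  finally have "int (num_solutions (Suc n) (diag r lam) c) = int q ^ n + int q ^ (n div 2) * eta K (d * (l * c))"
    using q_pos by simp
  moreover have "c * signed_disc lam (Suc n) = d * (l * c)"
    using n(2) by (simp add: signed_disc_def d_def l_def algebra_simps)
  ultimately show ?thesis by metis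
qed

lemma num_solutions_diag_even_step:
  assumes lam: "\<forall>i<r. lam i \<in> K - {0}" and n: "n < r" "odd n" and c: "c \<in> K"
    and IH: "\<And>c. c \<in> K \<Longrightarrow> int (num_solutions n (diag r lam) c)
               = int q ^ (n - 1) + int q ^ (n div 2) * eta K (c * signed_disc lam n)"
  shows "int q * int (num_solutions (Suc n) (diag r lam) c)
       = int q ^ Suc n + nu c * int q ^ (Suc n div 2) * eta K (signed_disc lam (Suc n))"
proof -
  define l where "l = lam n"
  define d where "d = signed_disc lam n"
  have l: "l \<in> K" "l \<noteq> 0" and d: "d \<in> K" "d \<noteq> 0"
    using lam n signed_disc_in_K[OF lam, of n] by (auto simp: l_def d_def)
  have eta_dw: "eta K ((c - w) * d) = eta K ((- d) * w + c * d)" for w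
    by (simp add: algebra_simps)
  have eta_ldw: "eta K (l * w) * eta K ((c - w) * d) = eta K (l * d) * eta K (w * (c - w))"
    if "w \<in> K" for w
    using that c l d K_diff eta_mult by (simp add: mult.commute mult.left_commute)
  have "int (num_solutions (Suc n) (diag r lam) c)
      = (\<Sum>w\<in>K. (1 + eta K (l * w)) * (int q ^ (n - 1) + int q ^ (n div 2) * eta K ((c - w) * d)))"
    using num_solutions_diag_Suc[OF n(1)] l IH c K_diff by (simp add: l_def d_def)
  also have "\<dots> = int q ^ (n - 1) * (\<Sum>w\<in>K. 1 + eta K (l * w))
      + int q ^ (n div 2) * (\<Sum>w\<in>K. eta K ((- d) * w + c * d))
      + int q ^ (n div 2) * (\<Sum>w\<in>K. eta K (l * w) * eta K ((c - w) * d))"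
    by (simp add: eta_dw sum.distrib sum_distrib_left algebra_simps)
  also have "\<dots> = int q ^ n + int q ^ (n div 2) * eta K (l * d) * (nu c * eta K (-1))"
  proof -
    have "(\<Sum>w\<in>K. eta K ((- d) * w + c * d)) = 0"
      by (rule sum_eta_affine) (use d c K_uminus K_mult in auto)
    moreover have "(\<Sum>w\<in>K. eta K (l * w) * eta K ((c - w) * d))
        = (\<Sum>w\<in>K. eta K (l * d) * eta K (w * (c - w)))"
      by (rule sum.cong) (simp_all add: eta_ldw)
    then have "(\<Sum>w\<in>K. eta K (l * w) * eta K ((c - w) * d)) = eta K (l * d) * (nu c * eta K (-1))"
      using sum_eta_mult_diff[OF c] by (simp flip: sum_distrib_left)
    moreover have "int q ^ (n - 1) * int q = int q ^ n"
      using n(2) by (metis odd_pos power_minus_mult)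
    ultimately show ?thesis
      using sum_one_plus_eta[OF l] by (simp add: algebra_simps)
  qed
  finally have "int q * int (num_solutions (Suc n) (diag r lam) c)
      = int q ^ Suc n + nu c * int q ^ Suc (n div 2) * (eta K (-1) * eta K (l * d))"
    by (simp add: algebra_simps)
  moreover have "signed_disc lam (Suc n) = (-1) * (l * d)" and "Suc n div 2 = Suc (n div 2)"
    using n(2) by (simp_all add: signed_disc_def d_def l_def algebra_simps)
  ultimately show ?thesis
    using eta_mult[of "-1" "l * d"] K_one K_uminus K_mult l d by simp
qed

text \<open>Lidl and Niederreiter, Finite Fields, Theorems 6.26 and 6.27, where \<open>nu\<close> is their function
  \<open>\<nu>\<close>.\<close>

lemma num_solutions_diag:
  assumes lam: "\<forall>i<r. lam i \<in> K - {0}"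
  shows "n \<le> r \<Longrightarrow> c \<in> K \<Longrightarrow>
    (even n \<longrightarrow> int q * int (num_solutions n (diag r lam) c)
       = int q ^ n + nu c * int q ^ (n div 2) * eta K (signed_disc lam n)) \<and>
    (odd n \<longrightarrow> int (num_solutions n (diag r lam) c)
       = int q ^ (n - 1) + int q ^ (n div 2) * eta K (c * signed_disc lam n))"
proof (induction n arbitrary: c)
  case 0
  then show ?case
    by (simp add: num_solutions_0 nu_def signed_disc_def eta_one)
next
  case (Suc n)
  then have "n < r" by simp
  show ?case
  proof (cases "even n")
    case True
    have "int (num_solutions (Suc n) (diag r lam) c)
        = int q ^ n + int q ^ (n div 2) * eta K (c * signed_disc lam (Suc n))"
      by (rule num_solutions_diag_odd_step[OF lam \<open>n < r\<close> True \<open>c \<in> K\<close>])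
        (use Suc.IH \<open>n < r\<close> True in auto)
    then show ?thesis
      using True by simp
  next
    case False
    have "int q * int (num_solutions (Suc n) (diag r lam) c)
        = int q ^ Suc n + nu c * int q ^ (Suc n div 2) * eta K (signed_disc lam (Suc n))"
      by (rule num_solutions_diag_even_step[OF lam \<open>n < r\<close> False \<open>c \<in> K\<close>])
        (use Suc.IH \<open>n < r\<close> False in auto)
    then show ?thesis
      using False by simp
  qed
qed

lemma num_solutions_diag_ge:
  "r \<le> n \<Longrightarrow> num_solutions n (diag r lam) c = q ^ (n - r) * num_solutions r (diag r lam) c"
proof (induction n)
  case (Suc n)
  show ?case
  proof (cases "r = Suc n")
    case False
    then have "r \<le> n"
      using Suc.prems by simp
    then have "num_solutions (Suc n) (diag r lam) c = q * num_solutions n (diag r lam) c"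
      by (simp add: num_solutions_Suc diag_def card_K)
    then show ?thesis
      using Suc.IH \<open>r \<le> n\<close> by (simp add: Suc_diff_le)
  qed simp
qed simp

lemma card_diag_eq_num_solutions:
  assumes "r \<le> n"
  shows "card {x \<in> {..<n} \<rightarrow>\<^sub>E K. (\<Sum>i<r. lam i * x i ^ 2) = c} = num_solutions n (diag r lam) c"
proof -
  have "(\<Sum>i<n. diag r lam i (x i)) = (\<Sum>i<r. lam i * x i ^ 2)" for x
  proof -
    have "(\<Sum>i<n. diag r lam i (x i)) = (\<Sum>i<r. diag r lam i (x i))"
      using assms by (intro sum.mono_neutral_right) (auto simp: diag_def)
    then show ?thesis
      by (simp add: diag_def)
  qed
  then show ?thesis
    by (simp add: num_solutions_def)
qed

lemma card_diag_zeros_even: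
  assumes lam: "\<forall>i<r. lam i \<in> K - {0}" and "r \<le> n" "even r"
  shows "real q * card {x \<in> {..<n} \<rightarrow>\<^sub>E K. (\<Sum>i<r. lam i * x i ^ 2) = 0}
       = real q ^ n * (eta K (signed_disc lam r) * (real q - 1) / real q ^ (r div 2) + 1)"
proof -
  let ?h = "real q ^ (r div 2)" and ?e = "real_of_int (eta K (signed_disc lam r))"
  have "int q * int (num_solutions r (diag r lam) 0)
      = int q ^ r + (int q - 1) * int q ^ (r div 2) * eta K (signed_disc lam r)"
    using num_solutions_diag[OF lam order.refl K_zero] \<open>even r\<close> by (simp add: nu_def)
  then have "real q * num_solutions r (diag r lam) 0 = real q ^ r + (real q - 1) * ?h * ?e"
    by (metis (mono_tags, opaque_lifting) of_int_of_nat_eq of_int_diff of_int_mult of_int_power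
        of_int_1 of_int_add)
  moreover have "real q ^ r = ?h * ?h"
    using \<open>even r\<close> by (metis mult_2 power_add even_two_times_div_two)
  ultimately have "real q * card {x \<in> {..<n} \<rightarrow>\<^sub>E K. (\<Sum>i<r. lam i * x i ^ 2) = 0}
      = real q ^ (n - r) * (?h * ?h + (real q - 1) * ?h * ?e)"
    using card_diag_eq_num_solutions[OF \<open>r \<le> n\<close>] num_solutions_diag_ge[OF \<open>r \<le> n\<close>] by simp
  also have "\<dots> = real q ^ (n - r) * real q ^ r * (?e * (real q - 1) / ?h + 1)"
    using q_pos \<open>real q ^ r = ?h * ?h\<close> by (simp add: field_simps)
  finally show ?thesis
    using \<open>r \<le> n\<close> by (simp flip: power_add)
qed

lemma card_diag_zeros_odd:
  assumes lam: "\<forall>i<r. lam i \<in> K - {0}" and "r \<le> n" "odd r"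
  shows "card {x \<in> {..<n} \<rightarrow>\<^sub>E K. (\<Sum>i<r. lam i * x i ^ 2) = 0} = q ^ (n - 1)"
proof -
  have "num_solutions r (diag r lam) 0 = q ^ (r - 1)"
    using num_solutions_diag[OF lam order.refl K_zero] \<open>odd r\<close> by (simp add: eta_def)
  moreover have "n - r + (r - 1) = n - 1"
    using \<open>r \<le> n\<close> \<open>odd r\<close> by (cases r) auto
  ultimately show ?thesis
    using card_diag_eq_num_solutions[OF \<open>r \<le> n\<close>] num_solutions_diag_ge[OF \<open>r \<le> n\<close>]
    by (simp flip: power_add)
qed

section \<open>Linear algebra over a finite field\<close>

lemma
  fixes S :: "'b::ab_group_add set" and f :: "'b \<Rightarrow> 'a" and smult :: "'a \<Rightarrow> 'b \<Rightarrow> 'b"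
  assumes "finite S"
    and add: "\<And>u v. u \<in> S \<Longrightarrow> v \<in> S \<Longrightarrow> u + v \<in> S"
    and diff: "\<And>u v. u \<in> S \<Longrightarrow> v \<in> S \<Longrightarrow> u - v \<in> S"
    and smult: "\<And>a u. a \<in> K \<Longrightarrow> u \<in> S \<Longrightarrow> smult a u \<in> S"
    and f_add: "\<And>u v. u \<in> S \<Longrightarrow> v \<in> S \<Longrightarrow> f (u + v) = f u + f v"
    and f_smult: "\<And>a u. a \<in> K \<Longrightarrow> u \<in> S \<Longrightarrow> f (smult a u) = a * f u"
    and f_K: "\<And>u. u \<in> S \<Longrightarrow> f u \<in> K"
    and z: "z \<in> S" "f z \<noteq> 0"
  shows card_level_set_linear: "k \<in> K \<Longrightarrow> card {u \<in> S. f u = k} = card {u \<in> S. f u = 0}"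
    and card_eq_q_mult_kernel: "card S = q * card {u \<in> S. f u = 0}"
proof -
  define z1 where "z1 = smult (1 / f z) z"
  have "1 / f z \<in> K"
    using K_one f_K[OF z(1)] K_divide by blast
  then have z1: "z1 \<in> S" "f z1 = 1"
    using smult f_smult z by (simp_all add: z1_def)
  have f_diff: "f (u - v) = f u - f v" if "u \<in> S" "v \<in> S" for u v
    using f_add[OF diff[OF that] that(2)] by simp
  have shift: "bij_betw (\<lambda>x. x + smult k z1) {u \<in> S. f u = 0} {u \<in> S. f u = k}"
    if k: "k \<in> K" for k
  proof (rule bij_betw_byWitness[where f' = "\<lambda>x. x - smult k z1"])
    have "smult k z1 \<in> S" "f (smult k z1) = k"
      using smult[OF k z1(1)] f_smult[OF k z1(1)] z1(2) by simp_all
    then show "(\<lambda>x. x + smult k z1) ` {u \<in> S. f u = 0} \<subseteq> {u \<in> S. f u = k}"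
      and "(\<lambda>x. x - smult k z1) ` {u \<in> S. f u = k} \<subseteq> {u \<in> S. f u = 0}"
      using add diff f_add f_diff by auto
  qed auto
  show "k \<in> K \<Longrightarrow> card {u \<in> S. f u = k} = card {u \<in> S. f u = 0}"
    using bij_betw_same_card[OF shift] by simp
  have "card S = card (\<Union>k\<in>K. {u \<in> S. f u = k})"
    using f_K by (intro arg_cong[where f = card]) auto
  also have "\<dots> = (\<Sum>k\<in>K. card {u \<in> S. f u = k})"
    using \<open>finite S\<close> by (intro card_UN_disjoint) auto
  also have "\<dots> = (\<Sum>k\<in>K. card {u \<in> S. f u = 0})"
    using bij_betw_same_card[OF shift] by (intro sum.cong) auto
  also have "\<dots> = q * card {u \<in> S. f u = 0}"
    using card_K by simp
  finally show "card S = q * card {u \<in> S. f u = 0}" .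
qed

definition K_subspace :: "'a set \<Rightarrow> bool" where
  "K_subspace W \<longleftrightarrow> 0 \<in> W \<and> (\<forall>x\<in>W. \<forall>y\<in>W. x + y \<in> W) \<and> (\<forall>a\<in>K. \<forall>x\<in>W. a * x \<in> W)"

lemma K_subspace_zero: "K_subspace W \<Longrightarrow> 0 \<in> W"
  and K_subspace_add: "K_subspace W \<Longrightarrow> x \<in> W \<Longrightarrow> y \<in> W \<Longrightarrow> x + y \<in> W"
  and K_subspace_smult: "K_subspace W \<Longrightarrow> a \<in> K \<Longrightarrow> x \<in> W \<Longrightarrow> a * x \<in> W"
  by (simp_all add: K_subspace_def)

lemma K_subspace_subfield: "subfield S \<Longrightarrow> K \<subseteq> S \<Longrightarrow> K_subspace S"
  by (auto simp: K_subspace_def intro: subfield_zero subfield_add subfield_mult)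

lemma K_subspace_diff: "K_subspace W \<Longrightarrow> x \<in> W \<Longrightarrow> y \<in> W \<Longrightarrow> x - y \<in> W"
  using K_subspace_add K_subspace_smult[of W "-1" y] K_one K_uminus by fastforce

lemma K_subspace_sum: "K_subspace W \<Longrightarrow> (\<And>i. i \<in> A \<Longrightarrow> f i \<in> W) \<Longrightarrow> sum f A \<in> W"
  by (induction A rule: infinite_finite_induct) (auto intro: K_subspace_zero K_subspace_add)

definition lin_comb :: "(nat \<Rightarrow> 'a) \<Rightarrow> nat \<Rightarrow> (nat \<Rightarrow> 'a) \<Rightarrow> 'a" where
  "lin_comb b n c = (\<Sum>i<n. c i * b i)"

lemma lin_comb_in_subspace:
  "K_subspace W \<Longrightarrow> (\<And>i. i < n \<Longrightarrow> b i \<in> W) \<Longrightarrow> c \<in> {..<n} \<rightarrow>\<^sub>E K \<Longrightarrow> lin_comb b n c \<in> W"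
  unfolding lin_comb_def by (rule K_subspace_sum) (auto intro: K_subspace_smult)

lemma lin_comb_restrict: "lin_comb b n (restrict c {..<n}) = lin_comb b n c"
  unfolding lin_comb_def by (rule sum.cong) auto

lemma card_coordinates: "card ({..<n} \<rightarrow>\<^sub>E K) = q ^ n"
  using card_K by (simp add: card_PiE)

lemma bij_betw_lin_comb_if_inj:
  assumes W: "K_subspace W" "card W = q ^ n" and b: "\<And>i. i < n \<Longrightarrow> b i \<in> W"
    and inj: "inj_on (lin_comb b n) ({..<n} \<rightarrow>\<^sub>E K)"
  shows "bij_betw (lin_comb b n) ({..<n} \<rightarrow>\<^sub>E K) W"
proof -
  have "lin_comb b n ` ({..<n} \<rightarrow>\<^sub>E K) \<subseteq> W"
    using lin_comb_in_subspace[OF W(1) b] by (simp add: image_subset_iff)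
  moreover have "card (lin_comb b n ` ({..<n} \<rightarrow>\<^sub>E K)) = card W"
    using card_image[OF inj] card_coordinates W(2) by simp
  ultimately show ?thesis
    using inj by (simp add: bij_betw_def card_subset_eq)
qed

lemma inj_on_lin_comb_extend:
  assumes inj: "inj_on (lin_comb b k) ({..<k} \<rightarrow>\<^sub>E K)"
    and w: "w \<notin> lin_comb b k ` ({..<k} \<rightarrow>\<^sub>E K)"
  shows "inj_on (lin_comb (b(k := w)) (Suc k)) ({..<Suc k} \<rightarrow>\<^sub>E K)"
proof (rule inj_onI)
  have lin_comb_upd: "lin_comb (b(k := w)) (Suc k) c = lin_comb b k c + c k * w" for c
  proof -
    have "(\<Sum>i<k. c i * (b(k := w)) i) = lin_comb b k c"
      unfolding lin_comb_def by (rule sum.cong) auto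
    then show ?thesis
      by (simp add: lin_comb_def)
  qed
  fix c e assume c: "c \<in> {..<Suc k} \<rightarrow>\<^sub>E K" and e: "e \<in> {..<Suc k} \<rightarrow>\<^sub>E K"
    and "lin_comb (b(k := w)) (Suc k) c = lin_comb (b(k := w)) (Suc k) e"
  then have eq: "lin_comb b k c - lin_comb b k e = (e k - c k) * w"
    by (simp add: lin_comb_upd algebra_simps)
  have "c k = e k"
  proof (rule ccontr)
    assume ne: "c k \<noteq> e k"
    define h where "h i = (c i - e i) / (e k - c k)" for i
    have h: "restrict h {..<k} \<in> {..<k} \<rightarrow>\<^sub>E K"
      using c e by (auto simp: h_def PiE_iff intro!: K_divide K_diff)
    have "h i * (e k - c k) = c i - e i" for i
      using ne by (simp add: h_def)
    then have "(\<Sum>i<k. (h i * (e k - c k)) * b i) = lin_comb b k c - lin_comb b k e"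
      by (simp add: lin_comb_def left_diff_distrib sum_subtractf)
    moreover have "lin_comb b k h * (e k - c k) = (\<Sum>i<k. (h i * (e k - c k)) * b i)"
      unfolding lin_comb_def sum_distrib_right by (simp add: mult_ac)
    ultimately have "(e k - c k) * w = (e k - c k) * lin_comb b k h"
      using eq by (metis mult.commute)
    then have "w = lin_comb b k (restrict h {..<k})"
      using ne by (simp add: lin_comb_restrict)
    with h w show False
      by (metis image_eqI)
  qed
  then have "lin_comb b k (restrict c {..<k}) = lin_comb b k (restrict e {..<k})"
    using eq by (simp add: lin_comb_restrict)
  moreover have "restrict c {..<k} \<in> {..<k} \<rightarrow>\<^sub>E K" "restrict e {..<k} \<in> {..<k} \<rightarrow>\<^sub>E K"
    using c e by (simp_all add: PiE_iff)
  ultimately have "restrict c {..<k} = restrict e {..<k}"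
    by (rule inj_onD[OF inj])
  then show "c = e"
    using \<open>c k = e k\<close> c e by (metis PiE_ext lessThan_iff less_Suc_eq restrict_apply)
qed

lemma exists_inj_lin_comb:
  assumes W: "K_subspace W" "card W = q ^ d"
  shows "k \<le> d \<Longrightarrow> \<exists>b. (\<forall>i<k. b i \<in> W) \<and> inj_on (lin_comb b k) ({..<k} \<rightarrow>\<^sub>E K)"
proof (induction k)
  case 0
  show ?case
    by (auto simp: inj_on_def)
next
  case (Suc k)
  then obtain b where b: "\<forall>i<k. b i \<in> W" and inj: "inj_on (lin_comb b k) ({..<k} \<rightarrow>\<^sub>E K)"
    by auto
  have "lin_comb b k ` ({..<k} \<rightarrow>\<^sub>E K) \<subseteq> W"
    using lin_comb_in_subspace[OF W(1)] b by blast
  moreover have "card (lin_comb b k ` ({..<k} \<rightarrow>\<^sub>E K)) < card W"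
    using card_image[OF inj] card_coordinates W(2) Suc.prems q_ge_3
    by (simp add: power_strict_increasing)
  ultimately obtain w where "w \<in> W" "w \<notin> lin_comb b k ` ({..<k} \<rightarrow>\<^sub>E K)"
    by (metis subsetI subset_antisym less_irrefl)
  moreover from this(1) have "\<forall>i<Suc k. (b(k := w)) i \<in> W"
    using b by (simp add: less_Suc_eq)
  ultimately show ?case
    using inj_on_lin_comb_extend[OF inj] by blast
qed

lemma exists_basis:
  assumes "K_subspace W" "card W = q ^ d"
  shows "\<exists>b. bij_betw (lin_comb b d) ({..<d} \<rightarrow>\<^sub>E K) W"
  using exists_inj_lin_comb[OF assms order.refl] bij_betw_lin_comb_if_inj[OF assms] by blast

lemma dimK_eq: "card V = q ^ d \<Longrightarrow> dimK K V = d"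
  unfolding dimK_def card_K using q_ge_3 by (auto simp: power_inject_exp)

lemma card_vanishing_coordinates:
  assumes "s \<le> n"
  shows "card {c \<in> {..<n} \<rightarrow>\<^sub>E K. \<forall>i<s. c i = 0} = q ^ (n - s)"
proof -
  have "{c \<in> {..<n} \<rightarrow>\<^sub>E K. \<forall>i<s. c i = 0} = PiE {..<n} (\<lambda>i. if i < s then {0} else K)"
  proof (intro set_eqI iffI)
    fix c assume c: "c \<in> PiE {..<n} (\<lambda>i. if i < s then {0} else K)"
    then have c_i: "c i \<in> (if i < s then {0} else K)" if "i < n" for i
      using PiE_mem[OF c] that by simp
    have "c i \<in> K" if "i < n" for i
      using c_i[OF that] K_zero by (cases "i < s") auto
    moreover have "c i = 0" if "i < s" for i
      using c_i[of i] that assms by simp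
    moreover have "c \<in> extensional {..<n}"
      using c by (simp add: PiE_iff)
    ultimately show "c \<in> {c \<in> {..<n} \<rightarrow>\<^sub>E K. \<forall>i<s. c i = 0}"
      by (simp add: PiE_iff)
  qed (simp add: PiE_iff)
  moreover have "(\<Prod>i<n. card (if i < s then {0} else K)) = (\<Prod>i<n. if i < s then 1 else q)"
    by (rule prod.cong) (simp_all add: card_K)
  moreover have "{..<n} \<inter> - {i. i < s} = {s..<n}"
    by auto
  ultimately show ?thesis
    by (simp add: card_PiE prod.If_cases)
qed

end

section \<open>Quadratic forms\<close>

locale quadratic_space = finite_subfield +
  fixes E :: "'a set" and n :: nat and Q :: "'a \<Rightarrow> 'a"
  assumes subspace_E: "K_subspace E" and card_E: "card E = q ^ n" and qform: "is_qform K E Q"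
begin

lemma Q_in_K: "x \<in> E \<Longrightarrow> Q x \<in> K"
  and Q_smult: "a \<in> K \<Longrightarrow> x \<in> E \<Longrightarrow> Q (a * x) = a ^ 2 * Q x"
  and bform_linear_right: "a \<in> K \<Longrightarrow> x \<in> E \<Longrightarrow> y \<in> E \<Longrightarrow> y' \<in> E \<Longrightarrow>
         bform Q x (a * y + y') = a * bform Q x y + bform Q x y'"
  using qform by (simp_all add: is_qform_def)

lemma Q_zero: "Q 0 = 0"
  using Q_smult[of 0 0] K_zero K_subspace_zero[OF subspace_E] by simp

lemma bform_in_K: "x \<in> E \<Longrightarrow> y \<in> E \<Longrightarrow> bform Q x y \<in> K"
  unfolding bform_def using Q_in_K K_subspace_add[OF subspace_E] K_diff K_divide K_two
  by metis

lemma Q_add: "Q (x + y) = Q x + Q y + 2 * bform Q x y"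
  using two_neq_zero by (simp add: bform_def field_simps)

lemma bform_self: "x \<in> E \<Longrightarrow> bform Q x x = Q x"
proof -
  assume "x \<in> E"
  have "Q (x + x) = 4 * Q x"
    using Q_smult[OF K_two \<open>x \<in> E\<close>] by (simp flip: mult_2)
  then show ?thesis
    using two_neq_zero by (simp add: bform_def)
qed

lemma bform_zero_right: "bform Q x 0 = 0"
  by (simp add: bform_def Q_zero)

lemma bform_smult_right: "a \<in> K \<Longrightarrow> x \<in> E \<Longrightarrow> y \<in> E \<Longrightarrow> bform Q x (a * y) = a * bform Q x y"
  using bform_linear_right[of a x y 0] K_subspace_zero[OF subspace_E] bform_zero_right by simp

lemma bform_add_right: "x \<in> E \<Longrightarrow> y \<in> E \<Longrightarrow> y' \<in> E \<Longrightarrow> bform Q x (y + y') = bform Q x y + bform Q x y'"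
  using bform_linear_right[OF K_one] by simp

lemma bform_commute: "bform Q x y = bform Q y x"
  by (simp add: bform_def add.commute)

lemma Q_add_orthogonal:
  assumes "e \<in> E" "w \<in> E" "bform Q e w = 0" "a \<in> K"
  shows "Q (a * e + w) = a ^ 2 * Q e + Q w"
proof -
  have "bform Q (a * e) w = 0"
    using assms bform_smult_right[of a w e] K_subspace_smult[OF subspace_E] by (simp add: bform_commute)
  then show ?thesis
    using assms by (simp add: Q_add Q_smult)
qed

lemma orthogonal_kernel:
  assumes W: "K_subspace W" "W \<subseteq> E" and e: "e \<in> W" "Q e \<noteq> 0"
  shows "K_subspace {x \<in> W. bform Q e x = 0}"
    and "card W = q * card {x \<in> W. bform Q e x = 0}"
proof -
  have "e \<in> E"
    using W e by blast
  show "K_subspace {x \<in> W. bform Q e x = 0}"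
    unfolding K_subspace_def
  proof (intro conjI ballI)
    show "0 \<in> {x \<in> W. bform Q e x = 0}"
      using K_subspace_zero[OF W(1)] bform_zero_right by simp
    fix x y a assume x: "x \<in> {x \<in> W. bform Q e x = 0}"
    then show "a \<in> K \<Longrightarrow> a * x \<in> {x \<in> W. bform Q e x = 0}"
      using W K_subspace_smult bform_smult_right \<open>e \<in> E\<close> by auto
    assume y: "y \<in> {x \<in> W. bform Q e x = 0}"
    with x W(2) have "x \<in> E" "y \<in> E"
      by auto
    with x y show "x + y \<in> {x \<in> W. bform Q e x = 0}"
      by (simp add: K_subspace_add[OF W(1)] bform_add_right[OF \<open>e \<in> E\<close>])
  qed
  show "card W = q * card {x \<in> W. bform Q e x = 0}"
  proof (rule card_eq_q_mult_kernel[where smult = "(*)" and z = e])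
    show "bform Q e e \<noteq> 0"
      using bform_self \<open>e \<in> E\<close> e by simp
  qed (use W e \<open>e \<in> E\<close> K_subspace_diff bform_in_K bform_add_right bform_smult_right in
       \<open>auto simp: K_subspace_def subset_iff\<close>)
qed

lemma lin_comb_cons: "lin_comb (case_nat e b) (Suc d) c = c 0 * e + lin_comb b d (\<lambda>i. c (Suc i))"
  unfolding lin_comb_def sum.lessThan_Suc_shift by simp

lemma orthogonal_decomposition:
  assumes W: "K_subspace W" "W \<subseteq> E" and e: "e \<in> W" "Q e \<noteq> 0" and x: "x \<in> W"
  obtains a w where "a \<in> K" "w \<in> W" "bform Q e w = 0" "x = a * e + w"
proof -
  define a where "a = bform Q e x / Q e"
  have "e \<in> E" "x \<in> E"
    using W e x by auto
  then have "a \<in> K" "- a \<in> K"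
    using bform_in_K Q_in_K K_divide K_uminus by (simp_all add: a_def)
  then have "bform Q e ((- a) * e + x) = 0"
    using bform_linear_right[of "- a" e e x] bform_self[of e] e(2) \<open>e \<in> E\<close> \<open>x \<in> E\<close>
    by (simp add: a_def)
  moreover have "(- a) * e + x \<in> W"
    using \<open>- a \<in> K\<close> e(1) x W(1) K_subspace_add K_subspace_smult by blast
  ultimately show ?thesis
    using that[of a "(- a) * e + x"] \<open>a \<in> K\<close> by simp
qed

lemma bij_betw_lin_comb_cons:
  assumes W: "K_subspace W" "W \<subseteq> E" "card W = q ^ Suc d" and e: "e \<in> W" "Q e \<noteq> 0"
    and b: "bij_betw (lin_comb b d) ({..<d} \<rightarrow>\<^sub>E K) {x \<in> W. bform Q e x = 0}"
  shows "bij_betw (lin_comb (case_nat e b) (Suc d)) ({..<Suc d} \<rightarrow>\<^sub>E K) W"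
proof -
  let ?P = "{..<Suc d} \<rightarrow>\<^sub>E K"
  have "lin_comb (case_nat e b) (Suc d) c \<in> W" if c: "c \<in> ?P" for c
  proof -
    have "restrict (\<lambda>i. c (Suc i)) {..<d} \<in> {..<d} \<rightarrow>\<^sub>E K"
      using c by (auto simp: PiE_iff)
    then have "lin_comb b d (restrict (\<lambda>i. c (Suc i)) {..<d}) \<in> W"
      using bij_betwE[OF b] by blast
    then have "lin_comb b d (\<lambda>i. c (Suc i)) \<in> W"
      by (simp add: lin_comb_restrict)
    moreover have "c 0 * e \<in> W"
      using c e W(1) K_subspace_smult by (auto simp: PiE_iff)
    ultimately show ?thesis
      using W(1) K_subspace_add lin_comb_cons by simp
  qed
  moreover have "x \<in> lin_comb (case_nat e b) (Suc d) ` ?P" if "x \<in> W" for x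
  proof -
    obtain a w where "a \<in> K" "w \<in> W" "bform Q e w = 0" "x = a * e + w"
      using orthogonal_decomposition[OF W(1,2) e \<open>x \<in> W\<close>] .
    moreover have "w \<in> lin_comb b d ` ({..<d} \<rightarrow>\<^sub>E K)"
      using b \<open>w \<in> W\<close> \<open>bform Q e w = 0\<close> by (simp add: bij_betw_def)
    then obtain c' where "c' \<in> {..<d} \<rightarrow>\<^sub>E K" "lin_comb b d c' = w"
      by blast
    ultimately have "restrict (case_nat a c') {..<Suc d} \<in> ?P"
      and "lin_comb (case_nat e b) (Suc d) (restrict (case_nat a c') {..<Suc d}) = x"
      by (auto simp: PiE_iff less_Suc_eq_0_disj lin_comb_restrict lin_comb_cons)
    then show ?thesis
      by (metis image_eqI)
  qed
  ultimately have "lin_comb (case_nat e b) (Suc d) ` ?P = W"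
    by blast
  moreover have "card ?P = card W" "finite ?P"
    using W(3) card_coordinates by (simp_all add: finite_PiE)
  ultimately show ?thesis
    by (metis bij_betw_def eq_card_imp_inj_on)
qed

lemma Q_lin_comb_cons:
  assumes e: "e \<in> E" and "s \<le> d"
    and b: "\<And>c. c \<in> {..<d} \<rightarrow>\<^sub>E K \<Longrightarrow> lin_comb b d c \<in> E \<and> bform Q e (lin_comb b d c) = 0"
    and Q_b: "\<forall>c\<in>{..<d} \<rightarrow>\<^sub>E K. Q (lin_comb b d c) = (\<Sum>i<s. lam i * c i ^ 2)"
    and c: "c \<in> {..<Suc d} \<rightarrow>\<^sub>E K"
  shows "Q (lin_comb (case_nat e b) (Suc d) c) = (\<Sum>i<Suc s. case_nat (Q e) lam i * c i ^ 2)"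
proof -
  let ?c' = "restrict (\<lambda>i. c (Suc i)) {..<d}"
  have c': "?c' \<in> {..<d} \<rightarrow>\<^sub>E K"
    using c by (auto simp: PiE_iff)
  moreover have "c 0 \<in> K"
    using c by auto
  ultimately have "Q (c 0 * e + lin_comb b d ?c') = c 0 ^ 2 * Q e + Q (lin_comb b d ?c')"
    using Q_add_orthogonal e b by blast
  also have "Q (lin_comb b d ?c') = (\<Sum>i<s. lam i * c (Suc i) ^ 2)"
    using Q_b c' \<open>s \<le> d\<close> by simp
  finally show ?thesis
    unfolding lin_comb_cons sum.lessThan_Suc_shift lin_comb_restrict by (simp add: mult.commute)
qed

lemma exists_diagonal_basis:
  "K_subspace W \<Longrightarrow> W \<subseteq> E \<Longrightarrow> card W = q ^ d \<Longrightarrow>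
   \<exists>b s lam. s \<le> d \<and> bij_betw (lin_comb b d) ({..<d} \<rightarrow>\<^sub>E K) W \<and> (\<forall>i<s. lam i \<in> K - {0}) \<and>
     (\<forall>c\<in>{..<d} \<rightarrow>\<^sub>E K. Q (lin_comb b d c) = (\<Sum>i<s. lam i * c i ^ 2))"
proof (induction d arbitrary: W)
  case 0
  then have "W = {0}"
    using K_subspace_zero by (metis card_1_singletonE power_0 singletonD)
  moreover have "lin_comb b 0 = (\<lambda>c. 0)" for b
    by (simp add: lin_comb_def fun_eq_iff)
  ultimately show ?case
    by (intro exI[of _ undefined] exI[of _ 0]) (simp add: bij_betw_def Q_zero)
next
  case (Suc d)
  show ?case
  proof (cases "\<exists>e\<in>W. Q e \<noteq> 0")
    case False
    obtain b where "bij_betw (lin_comb b (Suc d)) ({..<Suc d} \<rightarrow>\<^sub>E K) W"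
      using exists_basis Suc.prems by blast
    then show ?thesis
      using False by (intro exI[of _ b] exI[of _ 0]) (auto simp: bij_betw_def)
  next
    case True
    then obtain e where e: "e \<in> W" "Q e \<noteq> 0"
      by blast
    let ?W' = "{x \<in> W. bform Q e x = 0}"
    have "K_subspace ?W'" "card ?W' = q ^ d"
      using orthogonal_kernel[OF Suc.prems(1,2) e] Suc.prems(3) q_pos by auto
    then obtain b s lam where "s \<le> d" and b: "bij_betw (lin_comb b d) ({..<d} \<rightarrow>\<^sub>E K) ?W'"
      and lam: "\<forall>i<s. lam i \<in> K - {0}"
      and Q_b: "\<forall>c\<in>{..<d} \<rightarrow>\<^sub>E K. Q (lin_comb b d c) = (\<Sum>i<s. lam i * c i ^ 2)"
      using Suc.IH[of ?W'] Suc.prems(2) by blast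
    have "lin_comb b d c \<in> E \<and> bform Q e (lin_comb b d c) = 0" if "c \<in> {..<d} \<rightarrow>\<^sub>E K" for c
      using bij_betwE[OF b] that Suc.prems(2) by blast
    then have "\<forall>c\<in>{..<Suc d} \<rightarrow>\<^sub>E K.
        Q (lin_comb (case_nat e b) (Suc d) c) = (\<Sum>i<Suc s. case_nat (Q e) lam i * c i ^ 2)"
      using Q_lin_comb_cons[OF _ \<open>s \<le> d\<close> _ Q_b] e(1) Suc.prems(2) by blast
    moreover have "\<forall>i<Suc s. case_nat (Q e) lam i \<in> K - {0}"
      using lam e Q_in_K Suc.prems(2) by (auto simp: less_Suc_eq_0_disj)
    moreover have "bij_betw (lin_comb (case_nat e b) (Suc d)) ({..<Suc d} \<rightarrow>\<^sub>E K) W"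
      using bij_betw_lin_comb_cons[OF Suc.prems e b] .
    ultimately show ?thesis
      using \<open>s \<le> d\<close> by (intro exI[of _ "case_nat e b"] exI[of _ "Suc s"] exI[of _ "case_nat (Q e) lam"]) auto
  qed
qed

lemma K_basis_iff_bij_betw: "K_basis K E n b \<longleftrightarrow> bij_betw (lin_comb b n) ({..<n} \<rightarrow>\<^sub>E K) E"
proof
  assume "K_basis K E n b"
  then have into: "\<forall>c\<in>{..<n} \<rightarrow>\<^sub>E K. lin_comb b n c \<in> E"
    and unique: "\<forall>x\<in>E. \<exists>!c. c \<in> {..<n} \<rightarrow>\<^sub>E K \<and> x = lin_comb b n c"
    by (simp_all add: K_basis_def lin_comb_def)
  have "inj_on (lin_comb b n) ({..<n} \<rightarrow>\<^sub>E K)"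
    using into unique by (metis inj_onI)
  moreover have "lin_comb b n ` ({..<n} \<rightarrow>\<^sub>E K) = E"
    using into unique by blast
  ultimately show "bij_betw (lin_comb b n) ({..<n} \<rightarrow>\<^sub>E K) E"
    by (simp add: bij_betw_def)
next
  assume bij: "bij_betw (lin_comb b n) ({..<n} \<rightarrow>\<^sub>E K) E"
  have "\<forall>x\<in>E. \<exists>!c. c \<in> {..<n} \<rightarrow>\<^sub>E K \<and> x = lin_comb b n c"
    using bij unfolding bij_betw_def inj_on_def by blast
  then show "K_basis K E n b"
    using bij_betwE[OF bij] by (simp add: K_basis_def lin_comb_def)
qed

lemma bform_lin_comb_diag:
  assumes bij: "bij_betw (lin_comb b n) ({..<n} \<rightarrow>\<^sub>E K) E" and "s \<le> n"
    and Q_b: "\<forall>c\<in>{..<n} \<rightarrow>\<^sub>E K. Q (lin_comb b n c) = (\<Sum>i<s. lam i * c i ^ 2)"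
    and c: "c \<in> {..<n} \<rightarrow>\<^sub>E K" "c' \<in> {..<n} \<rightarrow>\<^sub>E K"
  shows "bform Q (lin_comb b n c) (lin_comb b n c') = (\<Sum>i<s. lam i * c i * c' i)"
proof -
  define d where "d = restrict (\<lambda>i. c i + c' i) {..<n}"
  have "d \<in> {..<n} \<rightarrow>\<^sub>E K"
    using c K_add by (auto simp: d_def PiE_iff)
  moreover have "lin_comb b n d = lin_comb b n c + lin_comb b n c'"
    by (simp add: d_def lin_comb_restrict lin_comb_def sum.distrib algebra_simps)
  ultimately have "Q (lin_comb b n c + lin_comb b n c') = (\<Sum>i<s. lam i * d i ^ 2)"
    using Q_b by metis
  also have "\<dots> = (\<Sum>i<s. lam i * (c i + c' i) ^ 2)"
    using \<open>s \<le> n\<close> by (intro sum.cong) (auto simp: d_def)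
  also have "\<dots> = (\<Sum>i<s. lam i * c i ^ 2) + (\<Sum>i<s. lam i * c' i ^ 2) + 2 * (\<Sum>i<s. lam i * c i * c' i)"
    by (simp add: power2_sum sum.distrib sum_distrib_left algebra_simps)
  finally have "Q (lin_comb b n c + lin_comb b n c')
      = (\<Sum>i<s. lam i * c i ^ 2) + (\<Sum>i<s. lam i * c' i ^ 2) + 2 * (\<Sum>i<s. lam i * c i * c' i)" .
  then show ?thesis
    using Q_b c two_neq_zero by (simp add: bform_def)
qed

lemma qf_radical_diag:
  assumes bij: "bij_betw (lin_comb b n) ({..<n} \<rightarrow>\<^sub>E K) E" and "s \<le> n"
    and lam: "\<forall>i<s. lam i \<in> K - {0}"
    and Q_b: "\<forall>c\<in>{..<n} \<rightarrow>\<^sub>E K. Q (lin_comb b n c) = (\<Sum>i<s. lam i * c i ^ 2)"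
  shows "qf_radical E Q = lin_comb b n ` {c \<in> {..<n} \<rightarrow>\<^sub>E K. \<forall>i<s. c i = 0}"
proof
  note bform_b = bform_lin_comb_diag[OF bij \<open>s \<le> n\<close> Q_b]
  show "qf_radical E Q \<subseteq> lin_comb b n ` {c \<in> {..<n} \<rightarrow>\<^sub>E K. \<forall>i<s. c i = 0}"
  proof
    fix x assume x: "x \<in> qf_radical E Q"
    then obtain c where c: "c \<in> {..<n} \<rightarrow>\<^sub>E K" "x = lin_comb b n c"
      using bij by (auto simp: qf_radical_def bij_betw_def)
    have "c j = 0" if "j < s" for j
    proof -
      define u where "u = restrict (\<lambda>i. if i = j then 1 else 0 :: 'a) {..<n}"
      have u: "u \<in> {..<n} \<rightarrow>\<^sub>E K"
        using K_zero K_one by (auto simp: u_def PiE_iff)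
      then have "bform Q x (lin_comb b n u) = 0"
        using x bij_betwE[OF bij] by (simp add: qf_radical_def)
      moreover have "(\<Sum>i<s. lam i * c i * u i) = (\<Sum>i<s. if i = j then lam i * c i else 0)"
        using \<open>s \<le> n\<close> by (intro sum.cong) (auto simp: u_def)
      then have "bform Q x (lin_comb b n u) = lam j * c j"
        using bform_b[OF c(1) u] that by (simp add: c(2))
      ultimately show ?thesis
        using lam that by simp
    qed
    then show "x \<in> lin_comb b n ` {c \<in> {..<n} \<rightarrow>\<^sub>E K. \<forall>i<s. c i = 0}"
      using c by blast
  qed
  show "lin_comb b n ` {c \<in> {..<n} \<rightarrow>\<^sub>E K. \<forall>i<s. c i = 0} \<subseteq> qf_radical E Q"
  proof
    fix x assume "x \<in> lin_comb b n ` {c \<in> {..<n} \<rightarrow>\<^sub>E K. \<forall>i<s. c i = 0}"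
    then obtain c where c: "c \<in> {..<n} \<rightarrow>\<^sub>E K" "\<forall>i<s. c i = 0" "x = lin_comb b n c"
      by blast
    have "bform Q x y = 0" if "y \<in> E" for y
    proof -
      obtain c' where "c' \<in> {..<n} \<rightarrow>\<^sub>E K" "y = lin_comb b n c'"
        using bij \<open>y \<in> E\<close> by (auto simp: bij_betw_def)
      then show ?thesis
        using bform_b[OF c(1)] c(2,3) by simp
    qed
    then show "x \<in> qf_radical E Q"
      using bij_betwE[OF bij] c by (simp add: qf_radical_def)
  qed
qed

lemma qf_rank_diag:
  assumes bij: "bij_betw (lin_comb b n) ({..<n} \<rightarrow>\<^sub>E K) E" and "s \<le> n"
    and lam: "\<forall>i<s. lam i \<in> K - {0}"
    and Q_b: "\<forall>c\<in>{..<n} \<rightarrow>\<^sub>E K. Q (lin_comb b n c) = (\<Sum>i<s. lam i * c i ^ 2)"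
  shows "qf_rank K E n Q = s"
proof -
  have "inj_on (lin_comb b n) {c \<in> {..<n} \<rightarrow>\<^sub>E K. \<forall>i<s. c i = 0}"
    using bij by (auto simp: bij_betw_def intro: inj_on_subset)
  then have "card (qf_radical E Q) = q ^ (n - s)"
    using qf_radical_diag[OF assms] card_vanishing_coordinates[OF \<open>s \<le> n\<close>] by (simp add: card_image)
  then show ?thesis
    using \<open>s \<le> n\<close> by (simp add: qf_rank_def dimK_eq)
qed

lemma qf_diag_exists:
  obtains lam b where "qf_diag K E n Q (qf_rank K E n Q) lam b"
    and "qf_Delta K E n Q = (\<Prod>i<qf_rank K E n Q. lam i)"
proof -
  let ?r = "qf_rank K E n Q"
  obtain b s lam where "s \<le> n" "bij_betw (lin_comb b n) ({..<n} \<rightarrow>\<^sub>E K) E" "\<forall>i<s. lam i \<in> K - {0}"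
    "\<forall>c\<in>{..<n} \<rightarrow>\<^sub>E K. Q (lin_comb b n c) = (\<Sum>i<s. lam i * c i ^ 2)"
    using exists_diagonal_basis[OF subspace_E order.refl card_E] by blast
  then have "qf_diag K E n Q ?r lam b"
    using qf_rank_diag unfolding qf_diag_def lin_comb_def[symmetric] K_basis_iff_bij_betw by simp
  then have "\<exists>b. qf_diag K E n Q ?r (SOME lam. \<exists>b. qf_diag K E n Q ?r lam b) b"
    using someI_ex[of "\<lambda>lam. \<exists>b. qf_diag K E n Q ?r lam b"] by blast
  then obtain b' where "qf_diag K E n Q ?r (SOME lam. \<exists>b. qf_diag K E n Q ?r lam b) b'" ..
  then show ?thesis
    using that by (simp add: qf_Delta_def Let_def)
qed

lemma qf_epsilon_diag:
  assumes diag: "qf_diag K E n Q (qf_rank K E n Q) lam b"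
    and Delta: "qf_Delta K E n Q = (\<Prod>i<qf_rank K E n Q. lam i)"
    and even: "even (qf_rank K E n Q)"
  shows "qf_epsilon p m K E n Q = eta K (signed_disc lam (qf_rank K E n Q))"
proof -
  let ?r = "qf_rank K E n Q"
  have "qf_Delta K E n Q \<in> K"
    using diag Delta by (auto simp: qf_diag_def intro: K_prod)
  then have "eta K (signed_disc lam ?r) = eta K (-1) ^ (?r div 2) * eta K (qf_Delta K E n Q)"
    using Delta K_one K_uminus K_power by (simp add: signed_disc_def eta_mult eta_power)
  also have "eta K (-1) ^ (?r div 2) = (-1) ^ ((p - 1) * m * ?r div 4)"
    using eta_minus_one_power[of "?r div 2"] even by simp
  finally show ?thesis
    using even by (simp add: qf_epsilon_def qf_varepsilon_def mult.commute)
qed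

lemma card_zeros_diag:
  assumes "qf_diag K E n Q r lam b"
  shows "card {x \<in> E. Q x = 0} = card {c \<in> {..<n} \<rightarrow>\<^sub>E K. (\<Sum>i<r. lam i * c i ^ 2) = 0}"
proof -
  have "bij_betw (lin_comb b n) ({..<n} \<rightarrow>\<^sub>E K) E"
    using assms by (simp add: qf_diag_def K_basis_iff_bij_betw)
  then have "card {x \<in> E. Q x = 0} = card {c \<in> {..<n} \<rightarrow>\<^sub>E K. Q (lin_comb b n c) = 0}"
    by (rule card_Collect_bij_betw)
  then show ?thesis
    using assms by (simp add: qf_diag_def lin_comb_def cong: conj_cong)
qed

lemma card_zeros_even:
  assumes "even (qf_rank K E n Q)"
  shows "real q * card {x \<in> E. Q x = 0}
       = real q ^ n * (qf_epsilon p m K E n Q * (real q - 1) / real q ^ (qf_rank K E n Q div 2) + 1)"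
proof -
  obtain lam b where diag: "qf_diag K E n Q (qf_rank K E n Q) lam b"
    and Delta: "qf_Delta K E n Q = (\<Prod>i<qf_rank K E n Q. lam i)"
    by (rule qf_diag_exists)
  have "qf_rank K E n Q \<le> n"
    by (simp add: qf_rank_def)
  then show ?thesis
    using card_diag_zeros_even[of _ lam] diag assms card_zeros_diag[OF diag] qf_epsilon_diag[OF diag Delta assms]
    by (simp add: qf_diag_def)
qed

lemma card_zeros_odd:
  assumes "odd (qf_rank K E n Q)"
  shows "card {x \<in> E. Q x = 0} = q ^ (n - 1)"
proof -
  obtain lam b where diag: "qf_diag K E n Q (qf_rank K E n Q) lam b"
    by (rule qf_diag_exists)
  have "qf_rank K E n Q \<le> n"
    by (simp add: qf_rank_def)
  then show ?thesis
    using card_diag_zeros_odd[of _ lam] diag assms card_zeros_diag[OF diag]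
    by (simp add: qf_diag_def)
qed

end

section \<open>The trace form\<close>

locale finite_extension = finite_subfield +
  fixes F :: "'a set" and s :: nat
  assumes subfield_F: "subfield F" and K_subset_F: "K \<subseteq> F" and card_F: "card F = q ^ s"
    and s_pos: "s \<ge> 1"
begin

abbreviation Tr :: "'a \<Rightarrow> 'a" where
  "Tr \<equiv> trace q s"

lemma trace_add: "Tr (x + y) = Tr x + Tr y"
  by (simp add: trace_def frobenius_add sum.distrib)

lemma trace_zero: "Tr 0 = 0"
  using q_pos by (simp add: trace_def power_0_left)

lemma trace_smult: "c \<in> K \<Longrightarrow> Tr (c * z) = c * Tr z"
  by (simp add: trace_def power_mult_distrib K_power_q_power sum_distrib_left)

lemma trace_in_K:
  assumes "z \<in> F"
  shows "Tr z \<in> K"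
proof -
  have "z ^ (q ^ s) = z"
    using subfield_power_card[OF subfield_F assms] card_F by simp
  then have "(\<Sum>i<s. z ^ (q ^ Suc i)) = (\<Sum>i<s. z ^ (q ^ i))"
    using sum.lessThan_Suc_shift[of "\<lambda>i. z ^ (q ^ i)" s] by simp
  then have "Tr z ^ q = Tr z"
    using frobenius_sum[of "\<lambda>i. z ^ (q ^ i)" "{..<s}" 1]
    by (simp add: trace_def power_mult[symmetric] mult.commute)
  then show ?thesis
    by (rule in_K_if_power_q)
qed

text \<open>\<open>Tr\<close> is a polynomial of degree \<open>q ^ (s - 1) < card F\<close>.\<close>

lemma trace_nonzero: "\<exists>z\<in>F. Tr z \<noteq> 0"
proof (rule ccontr)
  assume "\<not> (\<exists>z\<in>F. Tr z \<noteq> 0)"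
  define P :: "'a poly" where "P = (\<Sum>i<s. monom 1 (q ^ i))"
  have poly_P: "poly P x = Tr x" for x
    by (simp add: P_def poly_sum poly_monom trace_def)
  have coeff_P: "coeff P j = (\<Sum>i<s. if q ^ i = j then 1 else 0)" for j
    by (simp add: P_def coeff_sum coeff_monom)
  have "coeff P (q ^ (s - 1)) = (\<Sum>i<s. if i = s - 1 then 1 else 0)"
    unfolding coeff_P using q_ge_3 by (intro sum.cong) (simp_all add: power_inject_exp)
  then have "P \<noteq> 0"
    using s_pos by auto
  moreover have "degree P \<le> q ^ (s - 1)"
  proof (rule degree_le, intro allI impI)
    fix j assume "q ^ (s - 1) < j"
    moreover have "q ^ i \<le> q ^ (s - 1)" if "i < s" for i
      using that q_pos by (intro power_increasing) auto
    ultimately show "coeff P j = 0"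
      unfolding coeff_P by (intro sum.neutral) (auto simp: not_less[symmetric])
  qed
  ultimately have "card {x. poly P x = 0} \<le> q ^ (s - 1)"
    using card_poly_roots_bound[of P] by linarith
  moreover have "F \<subseteq> {x. poly P x = 0}"
    using \<open>\<not> (\<exists>z\<in>F. Tr z \<noteq> 0)\<close> poly_P by auto
  then have "q ^ s \<le> card {x. poly P x = 0}"
    using card_F card_mono[of "{x. poly P x = 0}" F] by simp
  moreover have "q ^ (s - 1) < q ^ s"
    using q_ge_3 s_pos by (intro power_strict_increasing) auto
  ultimately show False
    by simp
qed

definition pairing :: "'a \<times> 'a \<Rightarrow> 'a \<times> 'a \<Rightarrow> 'a" where
  "pairing u v = fst u * fst v + Tr (snd u * snd v)"

definition scale :: "'a \<Rightarrow> 'a \<times> 'a \<Rightarrow> 'a \<times> 'a" where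
  "scale c u = (c * fst u, c * snd u)"

definition orth :: "('a \<times> 'a) set \<Rightarrow> ('a \<times> 'a) set" where
  "orth W = {v \<in> K \<times> F. \<forall>w\<in>W. pairing w v = 0}"

lemma pairing_commute: "pairing u v = pairing v u"
  by (simp add: pairing_def mult.commute)

lemma pairing_add_left: "pairing (u + u') v = pairing u v + pairing u' v"
  by (simp add: pairing_def algebra_simps flip: trace_add)

lemma pairing_scale_left: "c \<in> K \<Longrightarrow> pairing (scale c u) v = c * pairing u v"
  using trace_smult[of c "snd u * snd v"] by (simp add: pairing_def scale_def algebra_simps)

lemma pairing_zero_left: "pairing 0 v = 0"
  by (simp add: pairing_def trace_zero)

lemma pairing_add_right: "pairing w (u + v) = pairing w u + pairing w v"
  and pairing_scale_right: "c \<in> K \<Longrightarrow> pairing w (scale c u) = c * pairing w u"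
  using pairing_add_left pairing_scale_left pairing_commute by metis+

lemma pairing_in_K: "u \<in> K \<times> F \<Longrightarrow> v \<in> K \<times> F \<Longrightarrow> pairing u v \<in> K"
  unfolding pairing_def using K_add K_mult trace_in_K subfield_mult[OF subfield_F] by auto

lemma pairing_nondegenerate:
  assumes "w \<in> K \<times> F" "w \<noteq> 0"
  shows "\<exists>v\<in>K \<times> F. pairing w v \<noteq> 0"
proof (cases "snd w = 0")
  case True
  then have "pairing w (1, 0) \<noteq> 0"
    using assms(2) by (simp add: pairing_def trace_zero prod_eq_iff)
  then show ?thesis
    using K_one subfield_zero[OF subfield_F] by blast
next
  case False
  obtain z where z: "z \<in> F" "Tr z \<noteq> 0"
    using trace_nonzero by blast
  then have "(0, z / snd w) \<in> K \<times> F"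
    using assms(1) K_zero subfield_divide[OF subfield_F] by auto
  moreover have "pairing w (0, z / snd w) = Tr z"
    using False by (simp add: pairing_def)
  ultimately show ?thesis
    using z(2) by metis
qed

lemma K_subspace_pair_subset: "K_subspace_pair K F W \<Longrightarrow> W \<subseteq> K \<times> F"
  and K_subspace_pair_zero: "K_subspace_pair K F W \<Longrightarrow> 0 \<in> W"
  and K_subspace_pair_add: "K_subspace_pair K F W \<Longrightarrow> u \<in> W \<Longrightarrow> v \<in> W \<Longrightarrow> u + v \<in> W"
  and K_subspace_pair_scale: "K_subspace_pair K F W \<Longrightarrow> c \<in> K \<Longrightarrow> u \<in> W \<Longrightarrow> scale c u \<in> W"
  by (simp_all add: K_subspace_pair_def zero_prod_def plus_prod_def scale_def)

lemma K_subspace_pair_diff: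
  assumes "K_subspace_pair K F W" "u \<in> W" "v \<in> W"
  shows "u - v \<in> W"
proof -
  have "u + scale (-1) v \<in> W"
    using assms K_one K_uminus by (intro K_subspace_pair_add K_subspace_pair_scale) auto
  moreover have "u + scale (-1) v = u - v"
    by (simp add: scale_def prod_eq_iff)
  ultimately show ?thesis
    by simp
qed

lemma K_subspace_pair_space: "K_subspace_pair K F (K \<times> F)"
  using K_zero K_add K_mult K_subset_F subfield_zero[OF subfield_F] subfield_add[OF subfield_F]
    subfield_mult[OF subfield_F]
  by (auto simp: K_subspace_pair_def)

lemma K_subspace_pair_orth: "K_subspace_pair K F (orth W)"
proof -
  have "0 \<in> orth W"
    using K_subspace_pair_zero[OF K_subspace_pair_space] by (simp add: orth_def pairing_commute[of _ 0] pairing_zero_left)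
  moreover have "u + v \<in> orth W" if "u \<in> orth W" "v \<in> orth W" for u v
    using that K_subspace_pair_add[OF K_subspace_pair_space] by (simp add: orth_def pairing_add_right)
  moreover have "scale c u \<in> orth W" if "c \<in> K" "u \<in> orth W" for c u
    using that K_subspace_pair_scale[OF K_subspace_pair_space] by (simp add: orth_def pairing_scale_right)
  ultimately show ?thesis
    by (auto simp: K_subspace_pair_def orth_def zero_prod_def plus_prod_def scale_def)
qed

lemma card_pairing_kernel:
  assumes W: "K_subspace_pair K F W" and v: "v \<in> K \<times> F" and w0: "w0 \<in> W" "pairing w0 v \<noteq> 0"
  shows "card W = q * card {w \<in> W. pairing w v = 0}"
proof (rule card_eq_q_mult_kernel[where smult = scale and z = w0])
  show "\<And>u u'. u \<in> W \<Longrightarrow> u' \<in> W \<Longrightarrow> u + u' \<in> W"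
    using K_subspace_pair_add[OF W] .
  show "\<And>u u'. u \<in> W \<Longrightarrow> u' \<in> W \<Longrightarrow> u - u' \<in> W"
    using K_subspace_pair_diff[OF W] .
  show "\<And>c u. c \<in> K \<Longrightarrow> u \<in> W \<Longrightarrow> scale c u \<in> W"
    using K_subspace_pair_scale[OF W] .
  show "\<And>u u'. pairing (u + u') v = pairing u v + pairing u' v"
    by (rule pairing_add_left)
  show "\<And>c u. c \<in> K \<Longrightarrow> pairing (scale c u) v = c * pairing u v"
    by (rule pairing_scale_left)
  show "\<And>u. u \<in> W \<Longrightarrow> pairing u v \<in> K"
    using K_subspace_pair_subset[OF W] v pairing_in_K by blast
qed (use w0 in auto)

lemma card_space: "card (K \<times> F) = q ^ Suc s"
  using card_K card_F by (simp add: card_cartesian_product)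

lemma card_pairing_kernel_space:
  assumes "w \<in> K \<times> F"
  shows "int q * card {v \<in> K \<times> F. pairing w v = 0} = (if w = 0 then int q else 1) * card (K \<times> F)"
proof (cases "w = 0")
  case False
  then obtain v0 where v0: "v0 \<in> K \<times> F" "pairing w v0 \<noteq> 0"
    using pairing_nondegenerate assms by blast
  have "card (K \<times> F) = q * card {v \<in> K \<times> F. pairing v w = 0}"
    by (rule card_pairing_kernel[OF K_subspace_pair_space]) (use assms v0 in \<open>auto simp: pairing_commute[of w]\<close>)
  then show ?thesis
    using False by (simp add: pairing_commute[of w])
qed (simp add: pairing_zero_left)

lemma card_pairing_kernel_subspace:
  assumes W: "K_subspace_pair K F W" and v: "v \<in> K \<times> F"
  shows "int q * card {w \<in> W. pairing w v = 0} = (if v \<in> orth W then int q else 1) * card W"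
proof (cases "v \<in> orth W")
  case True
  then have "{w \<in> W. pairing w v = 0} = W"
    by (auto simp: orth_def)
  then show ?thesis
    using True by simp
next
  case False
  then obtain w0 where "w0 \<in> W" "pairing w0 v \<noteq> 0"
    using v by (auto simp: orth_def)
  then show ?thesis
    using card_pairing_kernel[OF W v] False by simp
qed

lemma card_orth:
  assumes W: "K_subspace_pair K F W"
  shows "card (orth W) * card W = q ^ Suc s"
proof -
  let ?V = "K \<times> F"
  have WV: "W \<subseteq> ?V" and "finite W" and "orth W \<subseteq> ?V"
    using K_subspace_pair_subset[OF W] by (auto intro: finite_subset simp: orth_def)
  have "(\<Sum>w\<in>W. card ?V + (if w = 0 then (int q - 1) * card ?V else 0))
      = (\<Sum>w\<in>W. int q * card {v \<in> ?V. pairing w v = 0})"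
    by (intro sum.cong refl) (simp add: card_pairing_kernel_space[OF subsetD[OF WV]] algebra_simps)
  also have "\<dots> = (\<Sum>v\<in>?V. int q * card {w \<in> W. pairing w v = 0})"
    using sum_card_swap[OF \<open>finite W\<close>, of ?V "\<lambda>w v. pairing w v = 0"]
    by (simp flip: sum_distrib_left of_nat_sum)
  also have "\<dots> = (\<Sum>v\<in>?V. card W + (if v \<in> orth W then (int q - 1) * card W else 0))"
    by (intro sum.cong refl) (simp add: card_pairing_kernel_subspace[OF W] algebra_simps)
  finally have "(int q - 1) * card ?V = (int q - 1) * (card (orth W) * card W)"
    using K_subspace_pair_zero[OF W] \<open>finite W\<close> \<open>orth W \<subseteq> ?V\<close>
    by (simp add: sum.distrib sum.delta sum.If_cases Int_absorb1 algebra_simps)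
  then show ?thesis
    using q_ge_3 card_space by (simp flip: of_nat_mult)
qed

lemma orth_orth:
  assumes W: "K_subspace_pair K F W"
  shows "orth (orth W) = W"
proof -
  have "W \<subseteq> orth (orth W)"
    using K_subspace_pair_subset[OF W] by (auto simp: orth_def pairing_commute)
  moreover have "card (orth (orth W)) = card W"
    using card_orth[OF W] card_orth[OF K_subspace_pair_orth[of W]] K_subspace_pair_zero[OF K_subspace_pair_orth]
    by (metis card_0_eq empty_iff finite mult.commute mult_right_cancel)
  ultimately show ?thesis
    by (metis card_subset_eq finite)
qed

lemma card_orth_fibre: "a \<in> K \<Longrightarrow> card {y \<in> F. (a, y) \<in> orth H} = card {v \<in> orth H. fst v = a}"
proof -
  assume "a \<in> K"
  then have "{v \<in> orth H. fst v = a} = Pair a ` {y \<in> F. (a, y) \<in> orth H}"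
    by (auto simp: orth_def)
  then show ?thesis
    by (simp add: card_image inj_on_def)
qed

lemma card_orth_fibre_mem:
  assumes "(1, 0) \<in> H" "a \<in> K"
  shows "card {y \<in> F. (a, y) \<in> orth H} = (if a = 0 then card (orth H) else 0)"
proof -
  have "fst v = 0" if "v \<in> orth H" for v
    using that assms(1) by (auto simp: orth_def pairing_def trace_zero)
  then have "{v \<in> orth H. fst v = a} = (if a = 0 then orth H else {})"
    by auto
  then show ?thesis
    using card_orth_fibre[OF assms(2)] by simp
qed

lemma card_orth_fibre_not_mem:
  assumes H: "K_subspace_pair K F H" and "(1, 0) \<notin> H" "a \<in> K"
  shows "q * card {y \<in> F. (a, y) \<in> orth H} = card (orth H)"
proof -
  have "\<exists>v\<in>orth H. fst v \<noteq> 0"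
  proof (rule ccontr)
    assume "\<not> (\<exists>v\<in>orth H. fst v \<noteq> 0)"
    then have "(1, 0) \<in> orth (orth H)"
      using K_one subfield_zero[OF subfield_F] by (auto simp: orth_def pairing_def trace_zero)
    then show False
      using orth_orth[OF H] assms(2) by simp
  qed
  then obtain v0 where v0: "v0 \<in> orth H" "fst v0 \<noteq> 0"
    by blast
  have "finite (orth H)"
    and "\<And>u v. u \<in> orth H \<Longrightarrow> v \<in> orth H \<Longrightarrow> u + v \<in> orth H"
    and "\<And>u v. u \<in> orth H \<Longrightarrow> v \<in> orth H \<Longrightarrow> u - v \<in> orth H"
    and "\<And>c u. c \<in> K \<Longrightarrow> u \<in> orth H \<Longrightarrow> scale c u \<in> orth H"
    and "\<And>u v. fst (u + v) = fst u + fst v"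
    and "\<And>c u. fst (scale c u) = c * fst u"
    and "\<And>u. u \<in> orth H \<Longrightarrow> fst u \<in> K"
    using K_subspace_pair_add[OF K_subspace_pair_orth] K_subspace_pair_diff[OF K_subspace_pair_orth]
      K_subspace_pair_scale[OF K_subspace_pair_orth]
    by (auto simp: scale_def orth_def)
  note kernel = this v0
  show ?thesis
    using card_level_set_linear[OF kernel assms(3)] card_eq_q_mult_kernel[OF kernel]
      card_orth_fibre[OF assms(3)] by simp
qed

lemma card_solutions_eq_sum:
  fixes X :: "'a set"
  assumes "f ` X \<subseteq> K"
  shows "card {(x, y) \<in> X \<times> F. \<forall>(a, b)\<in>H. a * f x + Tr (b * y) = 0}
       = (\<Sum>x\<in>X. card {y \<in> F. (f x, y) \<in> orth H})"
proof -
  have "{(x, y) \<in> X \<times> F. \<forall>(a, b)\<in>H. a * f x + Tr (b * y) = 0} = Sigma X (\<lambda>x. {y \<in> F. (f x, y) \<in> orth H})"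
    using assms by (auto simp: orth_def pairing_def)
  then show ?thesis
    by simp
qed

lemma card_solutions_mem:
  fixes X :: "'a set"
  assumes H: "K_subspace_pair K F H" and "(1, 0) \<in> H" and f: "f ` X \<subseteq> K"
  shows "card {(x, y) \<in> X \<times> F. \<forall>(a, b)\<in>H. a * f x + Tr (b * y) = 0} * card H
       = card {x \<in> X. f x = 0} * q ^ Suc s"
proof -
  have "(\<Sum>x\<in>X. card {y \<in> F. (f x, y) \<in> orth H}) = (\<Sum>x\<in>X. if f x = 0 then card (orth H) else 0)"
    using f by (intro sum.cong refl) (simp add: card_orth_fibre_mem[OF \<open>(1, 0) \<in> H\<close>] image_subset_iff)
  also have "\<dots> = card {x \<in> X. f x = 0} * card (orth H)"
    by (simp add: sum.If_cases Int_def conj_commute)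
  finally show ?thesis
    using card_solutions_eq_sum[OF f] card_orth[OF H] by (simp add: mult.assoc)
qed

lemma card_solutions_not_mem:
  fixes X :: "'a set"
  assumes H: "K_subspace_pair K F H" and "(1, 0) \<notin> H" and f: "f ` X \<subseteq> K"
  shows "q * card {(x, y) \<in> X \<times> F. \<forall>(a, b)\<in>H. a * f x + Tr (b * y) = 0} * card H
       = card X * q ^ Suc s"
proof -
  have "q * (\<Sum>x\<in>X. card {y \<in> F. (f x, y) \<in> orth H}) = (\<Sum>x\<in>X. card (orth H))"
    using f by (simp add: sum_distrib_left card_orth_fibre_not_mem[OF H \<open>(1, 0) \<notin> H\<close>] image_subset_iff)
  then show ?thesis
    using card_solutions_eq_sum[OF f] card_orth[OF H] by (simp add: mult.assoc)
qed

lemma card_axis: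
  assumes H: "K_subspace_pair K F H"
  shows "card {(a, b) \<in> H. b = 0 \<and> a \<noteq> 0} = (if (1, 0) \<in> H then q - 1 else 0)"
proof (cases "(1, 0) \<in> H")
  case True
  have "{(a, b) \<in> H. b = 0 \<and> a \<noteq> 0} = (\<lambda>a. (a, 0)) ` (K - {0})"
  proof
    show "{(a, b) \<in> H. b = 0 \<and> a \<noteq> 0} \<subseteq> (\<lambda>a. (a, 0)) ` (K - {0})"
      using K_subspace_pair_subset[OF H] by auto
    show "(\<lambda>a. (a, 0)) ` (K - {0}) \<subseteq> {(a, b) \<in> H. b = 0 \<and> a \<noteq> 0}"
      using K_subspace_pair_scale[OF H _ True] by (auto simp: scale_def)
  qed
  then show ?thesis
    using True K_zero card_K by (simp add: card_image inj_on_def)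
next
  case False
  have "(a, 0) \<notin> H" if "a \<noteq> 0" for a
  proof
    assume "(a, 0) \<in> H"
    then have "scale (1 / a) (a, 0) \<in> H"
      using K_subspace_pair_subset[OF H] K_one K_divide by (auto intro: K_subspace_pair_scale[OF H])
    then show False
      using False \<open>a \<noteq> 0\<close> by (simp add: scale_def)
  qed
  then show ?thesis
    using False by auto
qed

end

section \<open>The number of solutions\<close>

context quadratic_space
begin

lemma card_solutions:
  assumes ext: "finite_extension K p m q F s" and H: "K_subspace_pair K F H" "card H = q ^ r"
    and "n \<ge> 1"
  defines "S \<equiv> {(x, y) \<in> E \<times> F. \<forall>(a, b)\<in>H. a * Q x + trace q s (b * y) = 0}"
    and "t \<equiv> card {(a, b) \<in> H. b = 0 \<and> a \<noteq> 0}"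
  shows "even (qf_rank K E n Q) \<Longrightarrow> real (card S)
           = real q ^ (n + s - r) * (qf_epsilon p m K E n Q * real t / real q ^ (qf_rank K E n Q div 2) + 1)"
    and "odd (qf_rank K E n Q) \<Longrightarrow> real (card S) = real q ^ (n + s - r)"
proof -
  interpret finite_extension K p m q F s
    by (rule ext)
  have "q ^ r \<le> q ^ Suc s"
    using H K_subspace_pair_subset card_space by (metis card_mono finite)
  then have "r \<le> Suc s"
    by (rule power_le_imp_le_exp[rotated]) (use q_ge_3 in simp)
  then have r: "r \<le> n + s"
    using \<open>n \<ge> 1\<close> by simp
  have Q_E: "Q ` E \<subseteq> K"
    using Q_in_K by blast
  have "(even (qf_rank K E n Q) \<longrightarrow> real (card S) * real q ^ r = real q ^ (n + s)
           * (qf_epsilon p m K E n Q * real t / real q ^ (qf_rank K E n Q div 2) + 1))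
      \<and> (odd (qf_rank K E n Q) \<longrightarrow> real (card S) * real q ^ r = real q ^ (n + s) * 1)"
  proof (cases "(1, 0) \<in> H")
    case True
    have S: "real (card S) * real q ^ r = real q ^ s * (real q * card {x \<in> E. Q x = 0})"
      using card_solutions_mem[OF H(1) True Q_E] H(2) by (simp add: S_def mult_ac flip: of_nat_mult of_nat_power)
    have "real t = real q - 1"
      using card_axis[OF H(1)] True q_pos by (simp add: t_def of_nat_diff)
    moreover have "real q ^ (n - 1) * real q = real q ^ n"
      using \<open>n \<ge> 1\<close> power_minus_mult[of n "real q"] by simp
    ultimately show ?thesis
      using S card_zeros_even card_zeros_odd by (simp add: power_add mult_ac)
  next
    case False
    have "real q * (real (card S) * real q ^ r) = real q * (real q ^ (n + s))"
      using card_solutions_not_mem[OF H(1) False Q_E] H(2) card_E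
      by (simp add: S_def power_add mult_ac flip: of_nat_mult of_nat_power)
    moreover have "t = 0"
      using card_axis[OF H(1)] False by (simp add: t_def)
    ultimately show ?thesis
      using q_pos by simp
  qed
  then show "even (qf_rank K E n Q) \<Longrightarrow> real (card S)
           = real q ^ (n + s - r) * (qf_epsilon p m K E n Q * real t / real q ^ (qf_rank K E n Q div 2) + 1)"
    and "odd (qf_rank K E n Q) \<Longrightarrow> real (card S) = real q ^ (n + s - r)"
    using eq_power_diff_mult[OF _ r, of "real q" "real (card S)"] q_pos by auto
qed

end

theorem lemma5:
  fixes p m m1 m2 r :: nat
    and K E1 E2 :: "'a::{field,finite} set"
    and Q :: "'a \<Rightarrow> 'a"
    and H :: "('a \<times> 'a) set"
  defines "q \<equiv> p ^ m"
  defines "M \<equiv> m1 + m2"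
  defines "rQ \<equiv> qf_rank K E1 m1 Q"
  defines "N \<equiv> card {(x, y) \<in> E1 \<times> E2 - {(0, 0)}.
                 \<forall>(a, b)\<in>H. a * Q x + trace q m2 (b * y) = 0}"
  defines "t \<equiv> card {(a, b) \<in> H. b = 0 \<and> a \<noteq> 0}"
  assumes "prime p" and "odd p" and "m \<ge> 1" and "m1 \<ge> 1" and "m2 \<ge> 1"
    and "subfield K" and "subfield E1" and "subfield E2"
    and "K \<subseteq> E1" and "K \<subseteq> E2"
    and "card K = q" and "card E1 = q ^ m1" and "card E2 = q ^ m2"
    and "is_qform K E1 Q"
    and "K_subspace_pair K E2 H" and "card H = q ^ r"
  shows "(even rQ \<longrightarrow> real N = real q ^ (M - r) *
            (real_of_int (qf_epsilon p m K E1 m1 Q) * real t / real q ^ (rQ div 2) + 1) - 1)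
       \<and> (odd rQ \<longrightarrow> real N = real q ^ (M - r) - 1)"
proof -
  interpret finite_subfield K p m q
    using assms by unfold_locales (simp_all add: q_def)
  interpret quadratic_space K p m q E1 m1 Q
    using assms K_subspace_subfield by unfold_locales simp_all
  have ext: "finite_extension K p m q E2 m2"
    using assms by unfold_locales simp_all
  define S where "S = {(x, y) \<in> E1 \<times> E2. \<forall>(a, b)\<in>H. a * Q x + trace q m2 (b * y) = 0}"
  have "(0, 0) \<in> S"
    using K_subspace_zero[OF subspace_E] subfield_zero[OF \<open>subfield E2\<close>] Q_zero
      finite_extension.trace_zero[OF ext]
    by (simp add: S_def)
  moreover have "N = card (S - {(0, 0)})"
    unfolding N_def S_def by (rule arg_cong[where f = card]) auto
  ultimately have "N = card S - 1" and "1 \<le> card S"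
    using card_gt_0_iff[of S] by (auto simp: card_Diff_singleton)
  then have "real N = real (card S) - 1"
    by (simp only: of_nat_diff of_nat_1)
  then show ?thesis
    using card_solutions[OF ext \<open>K_subspace_pair K E2 H\<close> \<open>card H = q ^ r\<close> \<open>m1 \<ge> 1\<close>]
    by (simp add: S_def M_def rQ_def t_def)
qed

end
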